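(* Let $R$ be a localizable partially ordered commutative ring with $\mathbb{N}\subseteq\mathrm{Loc}(R)$. Then the kernel of the extended Gelfand transformation $\widehat{\cdot}\colon R\to\mathscr{C}_\approx(\mathcal{D}_{\mathrm{loc}}(R))$ is $\{r\in R:\ \text{there is } s\in R^+ \text{ such that } -s\le nr\le s \text{ for all } n\in\mathbb{N}\}$.
   Context: All rings are commutative with unit $1$; ring morphisms are unital. A partially ordered commutative ring is a commutative ring $R$ with a partial order $\le$ such that $r\le s$ implies $r+t\le s+t$, and whose positive cone $R^+=\{r:0\le r\}$ is closed under multiplication and contains all squares. $\mathbb{N}=\{1,2,\dots\}$, $\mathbb{N}_0=\mathbb{N}\cup\{0\}$. $\mathrm{Loc}(R)$ is the set of $s\in 1+R^+$ such that for all $r\in R$, $rs\in R^+$ implies $r\in R^+$; $R$ is localizable if for every $r$ there is $s\in\mathrm{Loc}(R)$ with $-s\le r\le s$. Admissible domains: for a topological space $Y$, a set $\mathcal{D}$ of open subsets with $Y\in\mathcal{D}$, closed under finite intersections. On $\bigcup_{A\in\mathcal{D}}\mathscr{C}(A)$, operations are pointwise on $\operatorname{dom}f\cap\operatorname{dom}g$; $f\approx g$ iff $f|_A=g|_A$ for some $A\in\mathcal{D}$, $A\subseteq\operatorname{dom}f\cap\operatorname{dom}g$; $\mathscr{C}_\approx(\mathcal{D})$ is the quotient ring. $R_{\mathrm{loc}}$: fractions $r/s$ ($r\in R$, $s\in\mathrm{Loc}(R)$), $r/s=r'/s'$ iff $rs'=r's$, usual operations, $p/q\le r/s$ iff $ps\le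 rq$. $R^{\mathrm{bd}}_{\mathrm{loc}}=\{a:\exists n\in\mathbb{N}_0,\ -n\le a\le n\}$. $\mathcal{K}(R)$: ring morphisms $\varphi\colon R^{\mathrm{bd}}_{\mathrm{loc}}\to\mathbb{R}$ with $\varphi(a)\ge0$ for $a\ge0$, weak-$*$ topology. $\mathrm{O}_{s<\infty}=\{\varphi:\varphi(1/s)>0\}$, $\mathcal{D}_{\mathrm{loc}}(R)=\{\mathrm{O}_{s<\infty}:s\in\mathrm{Loc}(R)\}$. The extended Gelfand transformation sends $r$ to the class $\widehat r$ of $r_s\colon\mathrm{O}_{s<\infty}\to\mathbb{R}$, $\varphi\mapsto\varphi(1/s)^{-1}\varphi(r/s)$, for any $s\in\mathrm{Loc}(R)$ with $r/s\in R^{\mathrm{bd}}_{\mathrm{loc}}$ (independent of $s$); it is a ring morphism. *)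

theory Defs
  imports "HOL-Analysis.Analysis"
begin

definition po_comm_ring :: "('a::comm_ring_1 \<Rightarrow> 'a \<Rightarrow> bool) \<Rightarrow> bool" where
  "po_comm_ring le \<longleftrightarrow>
     (\<forall>r. le r r) \<and> (\<forall>r s. le r s \<and> le s r \<longrightarrow> r = s) \<and>
     (\<forall>r s t. le r s \<and> le s t \<longrightarrow> le r t) \<and>
     (\<forall>r s t. le r s \<longrightarrow> le (r + t) (s + t)) \<and>
     (\<forall>r s. le 0 r \<and> le 0 s \<longrightarrow> le 0 (r * s)) \<and>
     (\<forall>r. le 0 (r * r))"

definition Loc :: "('a::comm_ring_1 \<Rightarrow> 'a \<Rightarrow> bool) \<Rightarrow> 'a set" where
  "Loc le = {s. le 0 (s - 1) \<and> (\<forall>r. le 0 (r * s) \<longrightarrow> le 0 r)}"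

definition localizable :: "('a::comm_ring_1 \<Rightarrow> 'a \<Rightarrow> bool) \<Rightarrow> bool" where
  "localizable le \<longleftrightarrow> (\<forall>r. \<exists>s\<in>Loc le. le (- s) r \<and> le r s)"

text \<open>A fraction r/s of R_loc is represented by the pair (r,s) with s in Loc(R);
  (r,s) and (r',s') denote the same fraction iff r*s' = r'*s.\<close>

definition frac_eq :: "'a::comm_ring_1 \<times> 'a \<Rightarrow> 'a \<times> 'a \<Rightarrow> bool" where
  "frac_eq p q \<longleftrightarrow> fst p * snd q = fst q * snd p"

definition frac_le :: "('a::comm_ring_1 \<Rightarrow> 'a \<Rightarrow> bool) \<Rightarrow> 'a \<times> 'a \<Rightarrow> 'a \<times> 'a \<Rightarrow> bool" where
  "frac_le le p q \<longleftrightarrow> le (fst p * snd q) (fst q * snd p)"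

definition bd_fracs :: "('a::comm_ring_1 \<Rightarrow> 'a \<Rightarrow> bool) \<Rightarrow> ('a \<times> 'a) set" where
  "bd_fracs le = {(r, s). s \<in> Loc le \<and>
      (\<exists>n::nat. frac_le le (- of_nat n, 1) (r, s) \<and> frac_le le (r, s) (of_nat n, 1))}"

text \<open>K(R): positive unital ring morphisms R_loc^bd \<rightarrow> \<real>.  A morphism is represented by a
  function on representing pairs which respects equality of fractions, is additive,
  multiplicative, unital and positive, and is extensional (0 off the bounded pairs).\<close>

definition chars :: "('a::comm_ring_1 \<Rightarrow> 'a \<Rightarrow> bool) \<Rightarrow> (('a \<times> 'a) \<Rightarrow> real) set" where
  "chars le = {\<phi>.
     (\<forall>p. p \<notin> bd_fracs le \<longrightarrow> \<phi> p = 0) \<and>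
     (\<forall>p\<in>bd_fracs le. \<forall>q\<in>bd_fracs le. frac_eq p q \<longrightarrow> \<phi> p = \<phi> q) \<and>
     \<phi> (1, 1) = 1 \<and>
     (\<forall>r s r' s'. (r, s) \<in> bd_fracs le \<and> (r', s') \<in> bd_fracs le \<longrightarrow>
        \<phi> (r * s' + r' * s, s * s') = \<phi> (r, s) + \<phi> (r', s')) \<and>
     (\<forall>r s r' s'. (r, s) \<in> bd_fracs le \<and> (r', s') \<in> bd_fracs le \<longrightarrow>
        \<phi> (r * r', s * s') = \<phi> (r, s) * \<phi> (r', s')) \<and>
     (\<forall>p\<in>bd_fracs le. frac_le le (0, 1) p \<longrightarrow> \<phi> p \<ge> 0)}"

definition O_fin :: "('a::comm_ring_1 \<Rightarrow> 'a \<Rightarrow> bool) \<Rightarrow> 'a \<Rightarrow> (('a \<times> 'a) \<Rightarrow> real) set" where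
  "O_fin le s = {\<phi> \<in> chars le. \<phi> (1, s) > 0}"

definition D_loc :: "('a::comm_ring_1 \<Rightarrow> 'a \<Rightarrow> bool) \<Rightarrow> (('a \<times> 'a) \<Rightarrow> real) set set" where
  "D_loc le = O_fin le ` Loc le"

text \<open>Partially defined functions are pairs (domain, function).  The relation \<approx> of
  C_\<approx>(D): agreement on some member of D contained in both domains.\<close>
definition approx_eq :: "'b set set \<Rightarrow> 'b set \<times> ('b \<Rightarrow> real) \<Rightarrow> 'b set \<times> ('b \<Rightarrow> real) \<Rightarrow> bool" where
  "approx_eq D f g \<longleftrightarrow> (\<exists>A\<in>D. A \<subseteq> fst f \<inter> fst g \<and> (\<forall>x\<in>A. snd f x = snd g x))"

definition gelfand_rep :: "('a::comm_ring_1 \<Rightarrow> 'a \<Rightarrow> bool) \<Rightarrow> 'a \<Rightarrow> 'a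
     \<Rightarrow> (('a \<times> 'a) \<Rightarrow> real) set \<times> ((('a \<times> 'a) \<Rightarrow> real) \<Rightarrow> real)" where
  "gelfand_rep le r s = (O_fin le s, \<lambda>\<phi>. inverse (\<phi> (1, s)) * \<phi> (r, s))"

definition ext_gelfand :: "('a::comm_ring_1 \<Rightarrow> 'a \<Rightarrow> bool) \<Rightarrow> 'a
     \<Rightarrow> (('a \<times> 'a) \<Rightarrow> real) set \<times> ((('a \<times> 'a) \<Rightarrow> real) \<Rightarrow> real)" where
  "ext_gelfand le r = gelfand_rep le r (SOME s. s \<in> Loc le \<and> (r, s) \<in> bd_fracs le)"

definition gelfand_kernel :: "('a::comm_ring_1 \<Rightarrow> 'a \<Rightarrow> bool) \<Rightarrow> 'a set" where
  "gelfand_kernel le = {r. approx_eq (D_loc le) (ext_gelfand le r) (chars le, \<lambda>_. 0)}"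

end

(*
  Realise R_loc^bd as a subring A of the total ring of fractions of R (elements of Loc(R) are
  non-zero-divisors) with cone T = {r/s. 0 <= r}.  As N is contained in Loc(R), A contains every
  1/n and T is an archimedean preordering of A, so the Kadison-Dubois representation theorem
  applies: an element on which every character of (A, T) is positive lies in T.  It is proved by
  extending T - c T to a maximal preordering not containing -1; this is a total archimedean
  ordering, and its real place x |-> sup {i/j. i <= j x} is a character that is <= 0 at c.

  For u in Loc(R), all characters vanish at r/u iff 1 - n r/u and 1 + n r/u lie in T for all n,
  i.e. iff -u <= n r <= u for all n.  Characters of A are exactly the points of K(R), and r lies
  in the kernel of the Gelfand transformation iff all characters vanish at some such r/u: on
  O_{t<oo} the value phi(1/t) is positive, which lets one pass between r/s and r/(s t).
*)

theory Submission
  imports Defs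
begin

section \<open>The total ring of fractions\<close>

definition non_zero_divisor :: "'a::comm_ring_1 \<Rightarrow> bool" where
  "non_zero_divisor s \<longleftrightarrow> (\<forall>x. x * s = 0 \<longrightarrow> x = 0)"

lemma non_zero_divisor_1 [simp]: "non_zero_divisor 1"
  by (simp add: non_zero_divisor_def)

lemma non_zero_divisor_mult:
  "non_zero_divisor a \<Longrightarrow> non_zero_divisor b \<Longrightarrow> non_zero_divisor (a * b)"
  unfolding non_zero_divisor_def by (metis mult.assoc)

lemma non_zero_divisor_mult_right_cancel:
  "non_zero_divisor s \<Longrightarrow> x * s = y * s \<Longrightarrow> x = y"
  unfolding non_zero_divisor_def by (metis eq_iff_diff_eq_0 left_diff_distrib)

definition frac_rel :: "'a::comm_ring_1 \<times> 'a \<Rightarrow> 'a \<times> 'a \<Rightarrow> bool" where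
  "frac_rel x y \<longleftrightarrow>
     non_zero_divisor (snd x) \<and> non_zero_divisor (snd y) \<and> fst x * snd y = fst y * snd x"

lemma cross_mult_eq_trans:
  fixes a b a' b' a'' b'' :: "'a::comm_ring_1"
  assumes "a * b' = a' * b" and "a' * b'' = a'' * b'" and "non_zero_divisor b'"
  shows "a * b'' = a'' * b"
proof -
  have "(a * b'') * b' = (a * b') * b''"
    by (simp add: ac_simps)
  also have "\<dots> = (a' * b'') * b"
    unfolding assms(1) by (simp add: ac_simps)
  also have "\<dots> = (a'' * b) * b'"
    unfolding assms(2) by (simp add: ac_simps)
  finally have "(a * b'') * b' = (a'' * b) * b'" .
  then show ?thesis
    using assms(3) non_zero_divisor_mult_right_cancel by blast
qed

lemma cross_mult_eq_add:
  fixes a b a' b' c d c' d' :: "'a::comm_ring_1"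
  assumes "a * b' = a' * b" and "c * d' = c' * d"
  shows "(a * d + c * b) * (b' * d') = (a' * d' + c' * b') * (b * d)"
proof -
  have "(a * d + c * b) * (b' * d') = (a * b') * (d * d') + (c * d') * (b * b')"
    by (simp add: algebra_simps)
  also have "\<dots> = (a' * d' + c' * b') * (b * d)"
    unfolding assms by (simp add: algebra_simps)
  finally show ?thesis .
qed

lemma cross_mult_eq_mult:
  fixes a b a' b' c d c' d' :: "'a::comm_ring_1"
  assumes "a * b' = a' * b" and "c * d' = c' * d"
  shows "(a * c) * (b' * d') = (a' * c') * (b * d)"
proof -
  have "(a * c) * (b' * d') = (a * b') * (c * d')"
    by (simp add: algebra_simps)
  also have "\<dots> = (a' * c') * (b * d)"
    unfolding assms by (simp add: algebra_simps)
  finally show ?thesis .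
qed

lemma part_equivp_frac_rel: "part_equivp (frac_rel :: 'a::comm_ring_1 \<times> 'a \<Rightarrow> _)"
proof (rule part_equivpI)
  show "\<exists>x::'a \<times> 'a. frac_rel x x"
    by (rule exI[of _ "(0, 1)"]) (simp add: frac_rel_def)
  show "symp (frac_rel :: 'a \<times> 'a \<Rightarrow> _)"
    by (auto simp: symp_def frac_rel_def)
  show "transp (frac_rel :: 'a \<times> 'a \<Rightarrow> _)"
    unfolding transp_def frac_rel_def using cross_mult_eq_trans by blast
qed

quotient_type (overloaded) 'a fraction = "'a::comm_ring_1 \<times> 'a" / partial: frac_rel
  by (rule part_equivp_frac_rel)

lift_definition Fraction :: "'a::comm_ring_1 \<Rightarrow> 'a \<Rightarrow> 'a fraction"
  is "\<lambda>a b. if non_zero_divisor b then (a, b) else (0, 1)"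
  by (simp add: frac_rel_def)

lemma fraction_cases [cases type: fraction]:
  obtains a b where "q = Fraction a b" "non_zero_divisor b"
  by transfer (auto simp: frac_rel_def)

lemma Fraction_eq_iff:
  "non_zero_divisor b \<Longrightarrow> non_zero_divisor d \<Longrightarrow> Fraction a b = Fraction c d \<longleftrightarrow> a * d = c * b"
  by transfer (simp add: frac_rel_def)

instantiation fraction :: (comm_ring_1) comm_ring_1
begin

lift_definition zero_fraction :: "'a fraction" is "(0, 1)"
  by (simp add: frac_rel_def)

lift_definition one_fraction :: "'a fraction" is "(1, 1)"
  by (simp add: frac_rel_def)

lift_definition plus_fraction :: "'a fraction \<Rightarrow> 'a fraction \<Rightarrow> 'a fraction"
  is "\<lambda>x y. (fst x * snd y + fst y * snd x, snd x * snd y)"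
  by (auto simp: frac_rel_def non_zero_divisor_mult intro: cross_mult_eq_add)

lift_definition uminus_fraction :: "'a fraction \<Rightarrow> 'a fraction" is "\<lambda>x. (- fst x, snd x)"
  by (simp add: frac_rel_def)

definition minus_fraction :: "'a fraction \<Rightarrow> 'a fraction \<Rightarrow> 'a fraction" where
  "minus_fraction x y = x + - y"

lift_definition times_fraction :: "'a fraction \<Rightarrow> 'a fraction \<Rightarrow> 'a fraction"
  is "\<lambda>x y. (fst x * fst y, snd x * snd y)"
  by (auto simp: frac_rel_def non_zero_divisor_mult intro: cross_mult_eq_mult)

lemma zero_fraction_eq: "0 = Fraction 0 1"
  by transfer (simp add: frac_rel_def)

lemma one_fraction_eq: "1 = Fraction 1 1"
  by transfer (simp add: frac_rel_def)

lemma Fraction_add [simp]: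
  "non_zero_divisor b \<Longrightarrow> non_zero_divisor d \<Longrightarrow>
     Fraction a b + Fraction c d = Fraction (a * d + c * b) (b * d)"
  by transfer (simp add: frac_rel_def non_zero_divisor_mult)

lemma Fraction_uminus [simp]: "non_zero_divisor b \<Longrightarrow> - Fraction a b = Fraction (- a) b"
  by transfer (simp add: frac_rel_def)

lemma Fraction_diff [simp]:
  "non_zero_divisor b \<Longrightarrow> non_zero_divisor d \<Longrightarrow>
     Fraction a b - Fraction c d = Fraction (a * d - c * b) (b * d)"
  by (simp add: minus_fraction_def)

lemma Fraction_mult [simp]:
  "non_zero_divisor b \<Longrightarrow> non_zero_divisor d \<Longrightarrow>
     Fraction a b * Fraction c d = Fraction (a * c) (b * d)"
  by transfer (simp add: frac_rel_def non_zero_divisor_mult)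

instance
proof
  fix x y z :: "'a fraction"
  show "x * y * z = x * (y * z)"
    by (cases x, cases y, cases z) (simp add: Fraction_eq_iff algebra_simps non_zero_divisor_mult)
  show "x * y = y * x"
    by (cases x, cases y) (simp add: Fraction_eq_iff algebra_simps non_zero_divisor_mult)
  show "1 * x = x"
    by (cases x) (simp add: one_fraction_eq Fraction_eq_iff)
  show "x + y + z = x + (y + z)"
    by (cases x, cases y, cases z) (simp add: Fraction_eq_iff algebra_simps non_zero_divisor_mult)
  show "x + y = y + x"
    by (cases x, cases y) (simp add: Fraction_eq_iff algebra_simps non_zero_divisor_mult)
  show "0 + x = x"
    by (cases x) (simp add: zero_fraction_eq Fraction_eq_iff)
  show "- x + x = 0"
    by (cases x) (simp add: zero_fraction_eq Fraction_eq_iff non_zero_divisor_mult)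
  show "x - y = x + - y"
    by (simp add: minus_fraction_def)
  show "(x + y) * z = x * z + y * z"
    by (cases x, cases y, cases z) (simp add: Fraction_eq_iff algebra_simps non_zero_divisor_mult)
  show "(0::'a fraction) \<noteq> 1"
    by (simp add: zero_fraction_eq one_fraction_eq Fraction_eq_iff)
qed

end

lemma of_nat_eq_Fraction: "of_nat k = Fraction (of_nat k) 1"
  by (induct k) (simp_all add: zero_fraction_eq one_fraction_eq)

lemma of_nat_add_mult_Fraction:
  "non_zero_divisor u \<Longrightarrow>
     of_nat m + of_nat n * Fraction r u = Fraction (of_nat m * u + of_nat n * r) u"
  by (simp add: of_nat_eq_Fraction)

lemma of_nat_diff_mult_Fraction:
  "non_zero_divisor u \<Longrightarrow>
     of_nat m - of_nat n * Fraction r u = Fraction (of_nat m * u - of_nat n * r) u"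
  by (simp add: of_nat_eq_Fraction)

section \<open>Archimedean preorderings and their characters\<close>

lemma le_if_le_add_divide_nat:
  fixes a b c :: real
  assumes "\<And>M::nat. M \<ge> 1 \<Longrightarrow> a \<le> b + c / real M"
  shows "a \<le> b"
proof (rule ccontr)
  assume "\<not> a \<le> b"
  then have gap: "a - b > 0" by simp
  obtain N :: nat where "c / (a - b) < real N"
    using reals_Archimedean2 by blast
  then have "c < real N * (a - b)"
    using gap by (simp add: pos_divide_less_eq)
  also have "\<dots> \<le> real (N + 1) * (a - b)"
    using gap by (intro mult_right_mono) auto
  finally have "c / real (N + 1) < a - b"
    by (simp add: pos_divide_less_eq mult.commute)
  with assms[of "N + 1"] show False by simp
qed

lemma eq_0_if_nat_mult_bounded:
  fixes a :: real
  assumes "\<And>n::nat. n \<ge> 1 \<Longrightarrow> - 1 \<le> real n * a \<and> real n * a \<le> 1"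
  shows "a = 0"
proof -
  have "a \<le> 0 + 1 / real M" and "- a \<le> 0 + 1 / real M" if "M \<ge> 1" for M :: nat
    using assms[OF that] that by (simp_all add: le_divide_eq mult.commute)
  then have "a \<le> 0" and "- a \<le> 0"
    using le_if_le_add_divide_nat by blast+
  then show ?thesis by simp
qed

lemma le_add_divide_if_square_mult_le:
  fixes a b c :: real and M :: nat
  assumes "M \<ge> 1" and "real M * real M * a \<le> real M * real M * b + real M * c"
  shows "a \<le> b + c / real M"
proof -
  have M: "real M > 0" using assms(1) by simp
  have "real M * (real M * a) \<le> real M * (real M * b + c)"
    using assms(2) by (simp add: algebra_simps)
  then have "real M * a \<le> real M * b + c" using M by simp
  then show ?thesis using M by (simp add: field_simps)
qed

lemma mult_ge_if_ge_diff_one: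
  fixes u v p q :: real
  assumes "u \<ge> 0" "v \<ge> 0" "u \<ge> p - 1" "v \<ge> q - 1" "p \<ge> 0" "q \<ge> 0"
  shows "u * v \<ge> p * q - p - q"
proof (cases "p \<ge> 1 \<and> q \<ge> 1")
  case True
  have "(p - 1) * (q - 1) \<le> u * v" using assms True by (intro mult_mono) auto
  then show ?thesis by (simp add: algebra_simps)
next
  case False
  then have "p * q \<le> q \<or> p * q \<le> p"
    using assms(5,6) by (auto intro: mult_left_le mult_left_le_one_le)
  moreover have "0 \<le> u * v" using assms by simp
  ultimately show ?thesis using assms(5,6) by linarith
qed

locale archimedean_preordering =
  fixes A :: "'a::comm_ring_1 set" and T :: "'a set"
  assumes zero_mem: "0 \<in> A" and one_mem: "1 \<in> A"
    and add_mem: "x \<in> A \<Longrightarrow> y \<in> A \<Longrightarrow> x + y \<in> A"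
    and uminus_mem: "x \<in> A \<Longrightarrow> - x \<in> A"
    and mult_mem: "x \<in> A \<Longrightarrow> y \<in> A \<Longrightarrow> x * y \<in> A"
    and cone_subset: "T \<subseteq> A"
    and cone_add: "x \<in> T \<Longrightarrow> y \<in> T \<Longrightarrow> x + y \<in> T"
    and cone_mult: "x \<in> T \<Longrightarrow> y \<in> T \<Longrightarrow> x * y \<in> T"
    and square_in_cone: "x \<in> A \<Longrightarrow> x * x \<in> T"
    and archimedean: "x \<in> A \<Longrightarrow> \<exists>n::nat. of_nat n - x \<in> T \<and> of_nat n + x \<in> T"
    and nat_invertible: "k \<ge> 1 \<Longrightarrow> \<exists>v\<in>A. of_nat k * v = 1"
begin

lemma diff_mem: "x \<in> A \<Longrightarrow> y \<in> A \<Longrightarrow> x - y \<in> A"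
  using add_mem uminus_mem by (metis diff_conv_add_uminus)

lemma of_nat_mem: "of_nat n \<in> A"
  by (induct n) (auto simp: zero_mem one_mem add_mem)

lemma of_int_mem: "of_int i \<in> A"
proof (cases "i \<ge> 0")
  case True
  then show ?thesis using of_nat_mem[of "nat i"] by simp
next
  case False
  then show ?thesis using uminus_mem[OF of_nat_mem[of "nat (- i)"]] by simp
qed

lemma zero_in_cone: "0 \<in> T"
  using square_in_cone[OF zero_mem] by simp

lemma one_in_cone: "1 \<in> T"
  using square_in_cone[OF one_mem] by simp

lemma of_nat_in_cone: "of_nat n \<in> T"
  by (induct n) (auto simp: zero_in_cone one_in_cone cone_add)

lemma of_int_in_cone: "i \<ge> 0 \<Longrightarrow> of_int i \<in> T"
  using of_nat_in_cone[of "nat i"] by simp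

definition preordering :: "'a set \<Rightarrow> bool" where
  "preordering P \<longleftrightarrow> T \<subseteq> P \<and> P \<subseteq> A \<and> (\<forall>x\<in>P. \<forall>y\<in>P. x + y \<in> P \<and> x * y \<in> P)"

lemma preordering_cone: "preordering T"
  using cone_subset cone_add cone_mult by (auto simp: preordering_def)

lemma preordering_divide_nat:
  assumes P: "preordering P" and k: "k \<ge> 1" and "x \<in> A" and kx: "of_nat k * x \<in> P"
  shows "x \<in> P"
proof -
  obtain v where v: "v \<in> A" "of_nat k * v = 1"
    using nat_invertible[OF k] by blast
  have "v = of_nat k * (v * v)"
    using v(2) by (metis mult.assoc mult.left_commute mult_1_right)
  then have "v \<in> T"
    using cone_mult[OF of_nat_in_cone[of k] square_in_cone[OF v(1)]] by simp
  then have "v * (of_nat k * x) \<in> P"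
    using P kx unfolding preordering_def by blast
  moreover have "v * (of_nat k * x) = x"
    using v(2) by (simp add: mult.assoc[symmetric] mult.commute)
  ultimately show ?thesis by simp
qed

lemma in_cone_if_mult_eq_one_plus:
  assumes c: "c \<in> A" and \<sigma>: "\<sigma> \<in> T" and \<tau>: "\<tau> \<in> T" and eq: "c * \<sigma> = 1 + \<tau>"
  shows "c \<in> T"
proof -
  obtain k0 :: nat where "of_nat k0 - \<sigma> \<in> T"
    using archimedean \<sigma> cone_subset by blast
  then have "(of_nat k0 - \<sigma>) + 1 \<in> T"
    by (rule cone_add[OF _ one_in_cone])
  then have "of_nat (k0 + 1) - \<sigma> \<in> T"
    by (simp add: algebra_simps)
  then obtain k :: nat where k: "k \<ge> 1" "of_nat k - \<sigma> \<in> T"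
    by (meson le_add2)
  obtain m :: nat where m: "of_nat m + c \<in> T"
    using archimedean c by blast
  \<comment> \<open>As \<open>c \<sigma> = 1 + \<tau>\<close>, \<open>(k c + M + 1) (k - \<sigma>) + k \<tau> + (M + 1) \<sigma> = k (k c + M)\<close>: so the
    constant in \<open>k c + m k \<in> T\<close> can be lowered step by step down to 0.\<close>
  have \<tau>_eq: "\<tau> = c * \<sigma> - 1"
    using eq by simp
  have step: "of_nat k * c + of_nat M \<in> T" if "of_nat k * c + of_nat (Suc M) \<in> T" for M
  proof -
    have "(of_nat k * c + of_nat (Suc M)) * (of_nat k - \<sigma>) + of_nat k * \<tau> + of_nat (Suc M) * \<sigma>
        = of_nat k * (of_nat k * c + of_nat M)"
      unfolding \<tau>_eq by (simp add: algebra_simps)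
    moreover have "(of_nat k * c + of_nat (Suc M)) * (of_nat k - \<sigma>) + of_nat k * \<tau>
        + of_nat (Suc M) * \<sigma> \<in> T"
      by (rule cone_add[OF cone_add[OF cone_mult[OF that k(2)] cone_mult[OF of_nat_in_cone \<tau>]]
            cone_mult[OF of_nat_in_cone \<sigma>]])
    ultimately have "of_nat k * (of_nat k * c + of_nat M) \<in> T" by simp
    then show ?thesis
      using preordering_divide_nat[OF preordering_cone k(1)] c
      by (simp add: add_mem mult_mem of_nat_mem)
  qed
  have "of_nat k * c + of_nat (m * k - N) \<in> T" if "N \<le> m * k" for N
    using that
  proof (induct N)
    case 0
    have "of_nat k * (of_nat m + c) \<in> T"
      using cone_mult[OF of_nat_in_cone m] .
    then show ?case by (simp add: algebra_simps)
  next
    case (Suc N)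
    then have "of_nat k * c + of_nat (Suc (m * k - Suc N)) \<in> T"
      by (simp add: Suc_diff_Suc)
    then show ?case by (rule step)
  qed
  from this[of "m * k"] have "of_nat k * c \<in> T" by simp
  then show ?thesis
    using preordering_divide_nat[OF preordering_cone k(1) c] by simp
qed

definition character :: "('a \<Rightarrow> real) \<Rightarrow> bool" where
  "character \<psi> \<longleftrightarrow>
     (\<forall>x\<in>A. \<forall>y\<in>A. \<psi> (x + y) = \<psi> x + \<psi> y \<and> \<psi> (x * y) = \<psi> x * \<psi> y) \<and>
     \<psi> 1 = 1 \<and> (\<forall>t\<in>T. \<psi> t \<ge> 0)"

lemma character_add: "character \<psi> \<Longrightarrow> x \<in> A \<Longrightarrow> y \<in> A \<Longrightarrow> \<psi> (x + y) = \<psi> x + \<psi> y"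
  and character_mult: "character \<psi> \<Longrightarrow> x \<in> A \<Longrightarrow> y \<in> A \<Longrightarrow> \<psi> (x * y) = \<psi> x * \<psi> y"
  and character_one: "character \<psi> \<Longrightarrow> \<psi> 1 = 1"
  and character_nonneg: "character \<psi> \<Longrightarrow> t \<in> T \<Longrightarrow> \<psi> t \<ge> 0"
  unfolding character_def by auto

lemma character_zero: "character \<psi> \<Longrightarrow> \<psi> 0 = 0"
  using character_add[of \<psi> 0 0] zero_mem by simp

lemma character_uminus: "character \<psi> \<Longrightarrow> x \<in> A \<Longrightarrow> \<psi> (- x) = - \<psi> x"
  using character_add[of \<psi> x "- x"] character_zero[of \<psi>] uminus_mem by simp

lemma character_diff: "character \<psi> \<Longrightarrow> x \<in> A \<Longrightarrow> y \<in> A \<Longrightarrow> \<psi> (x - y) = \<psi> x - \<psi> y"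
  using character_add[of \<psi> x "- y"] character_uminus[of \<psi> y] uminus_mem by simp

lemma character_of_nat_mult:
  assumes "character \<psi>" and "x \<in> A"
  shows "\<psi> (of_nat n * x) = real n * \<psi> x"
proof (induct n)
  case 0
  then show ?case using character_zero[OF assms(1)] by simp
next
  case (Suc n)
  have "\<psi> (of_nat (Suc n) * x) = \<psi> (x + of_nat n * x)"
    by (simp add: algebra_simps)
  also have "\<dots> = \<psi> x + \<psi> (of_nat n * x)"
    using character_add assms mult_mem of_nat_mem by blast
  finally show ?case using Suc by (simp add: algebra_simps)
qed

end

locale archimedean_ordering = archimedean_preordering +
  fixes P :: "'a set"
  assumes preordering_P: "preordering P"
    and minus_one_notin_P: "- 1 \<notin> P"
    and total: "x \<in> A \<Longrightarrow> x \<in> P \<or> - x \<in> P"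
begin

lemma cone_subset_P: "T \<subseteq> P" and P_subset: "P \<subseteq> A"
  and P_add: "x \<in> P \<Longrightarrow> y \<in> P \<Longrightarrow> x + y \<in> P"
  and P_mult: "x \<in> P \<Longrightarrow> y \<in> P \<Longrightarrow> x * y \<in> P"
  using preordering_P by (auto simp: preordering_def)

lemma of_nat_in_P: "of_nat n \<in> P"
  using cone_subset_P of_nat_in_cone by blast

lemma of_int_in_P_iff: "of_int i \<in> P \<longleftrightarrow> i \<ge> 0"
proof
  assume i: "of_int i \<in> P"
  show "i \<ge> 0"
  proof (rule ccontr)
    assume "\<not> i \<ge> 0"
    then have "of_int (- i - 1) \<in> T"
      by (intro of_int_in_cone) simp
    then have "of_int (- i - 1) \<in> P"
      using cone_subset_P by blast
    then have "of_int i + of_int (- i - 1) \<in> P"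
      using P_add i by blast
    then show False using minus_one_notin_P by simp
  qed
qed (use cone_subset_P of_int_in_cone in blast)

lemma cross_le_if_in_P:
  assumes "j > 0" and "j' > 0" and "x \<in> A"
    and lower: "of_nat j * x - of_int i \<in> P" and upper: "of_int i' - of_nat j' * x \<in> P"
  shows "i * int j' \<le> i' * int j"
proof -
  have "of_nat j' * (of_nat j * x - of_int i) + of_nat j * (of_int i' - of_nat j' * x) \<in> P"
    using lower upper of_nat_in_P P_add P_mult by blast
  moreover have "of_nat j' * (of_nat j * x - of_int i) + of_nat j * (of_int i' - of_nat j' * x)
     = (of_int (i' * int j - i * int j') :: 'a)"
    by (simp add: algebra_simps)
  ultimately have "of_int (i' * int j - i * int j') \<in> P"
    by simp
  then show ?thesis
    unfolding of_int_in_P_iff by simp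
qed

definition lower_rationals :: "'a \<Rightarrow> real set" where
  "lower_rationals x = {of_int i / real j | i j. j > 0 \<and> of_nat j * x - of_int i \<in> P}"

(* The real place of the ordering P: the cut that x makes in the rationals. *)
definition ord_val :: "'a \<Rightarrow> real" where
  "ord_val x = Sup (lower_rationals x)"

lemma lower_rationals_nonempty: "x \<in> A \<Longrightarrow> lower_rationals x \<noteq> {}"
proof -
  assume "x \<in> A"
  then obtain n :: nat where "of_nat n + x \<in> T"
    using archimedean by blast
  then have "of_nat 1 * x - of_int (- int n) \<in> P"
    using cone_subset_P by (auto simp: add.commute)
  then have "of_int (- int n) / real (1::nat) \<in> lower_rationals x"
    unfolding lower_rationals_def by blast
  then show ?thesis by blast
qed

lemma bdd_above_lower_rationals: "x \<in> A \<Longrightarrow> bdd_above (lower_rationals x)"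
proof -
  assume x: "x \<in> A"
  then obtain n :: nat where "of_nat n - x \<in> T"
    using archimedean by blast
  then have n: "of_int (int n) - of_nat 1 * x \<in> P"
    using cone_subset_P by auto
  show ?thesis unfolding bdd_above_def
  proof (intro exI ballI)
    fix y assume "y \<in> lower_rationals x"
    then obtain i j where y: "y = of_int i / real j" "j > 0" "of_nat j * x - of_int i \<in> P"
      unfolding lower_rationals_def by blast
    have "i \<le> int n * int j"
      using cross_le_if_in_P[OF y(2) _ x y(3) n] by simp
    then have "of_int i \<le> real n * real j"
      by (metis of_int_le_iff of_int_of_nat_eq of_nat_mult)
    then show "y \<le> real n"
      using y(1,2) by (simp add: divide_le_eq)
  qed
qed

lemma of_int_le_ord_val:
  assumes "j > 0" and x: "x \<in> A" and "of_nat j * x - of_int i \<in> P"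
  shows "of_int i \<le> real j * ord_val x"
proof -
  have "of_int i / real j \<in> lower_rationals x"
    unfolding lower_rationals_def using assms by blast
  then have "of_int i / real j \<le> ord_val x"
    unfolding ord_val_def using bdd_above_lower_rationals[OF x] by (rule cSup_upper)
  then show ?thesis
    using assms(1) by (simp add: divide_le_eq mult.commute)
qed

lemma ord_val_le_of_int:
  assumes j: "j > 0" and x: "x \<in> A" and upper: "of_int i - of_nat j * x \<in> P"
  shows "real j * ord_val x \<le> of_int i"
proof -
  have "ord_val x \<le> of_int i / real j"
    unfolding ord_val_def
  proof (rule cSup_least[OF lower_rationals_nonempty[OF x]])
    fix y assume "y \<in> lower_rationals x"
    then obtain i0 j0 where y: "y = of_int i0 / real j0" "j0 > 0" "of_nat j0 * x - of_int i0 \<in> P"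
      unfolding lower_rationals_def by blast
    have "i0 * int j \<le> i * int j0"
      using cross_le_if_in_P[OF y(2) j x y(3) upper] .
    then have "of_int i0 * real j \<le> of_int i * real j0"
      by (metis of_int_le_iff of_int_mult of_int_of_nat_eq)
    then show "y \<le> of_int i / real j"
      using y(1,2) j by (simp add: divide_le_eq le_divide_eq mult.commute)
  qed
  then show ?thesis
    using j by (simp add: le_divide_eq mult.commute)
qed

lemma in_P_if_of_int_less_ord_val:
  assumes j: "j > 0" and x: "x \<in> A" and less: "of_int i < real j * ord_val x"
  shows "of_nat j * x - of_int i \<in> P"
proof (rule ccontr)
  assume "of_nat j * x - of_int i \<notin> P"
  then have "of_int i - of_nat j * x \<in> P"
    using total[OF diff_mem[OF mult_mem[OF of_nat_mem[of j] x] of_int_mem[of i]]] by simp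
  from ord_val_le_of_int[OF j x this] less show False by simp
qed

lemma in_P_if_ord_val_less_of_int:
  assumes j: "j > 0" and x: "x \<in> A" and less: "real j * ord_val x < of_int i"
  shows "of_int i - of_nat j * x \<in> P"
proof (rule ccontr)
  assume "of_int i - of_nat j * x \<notin> P"
  then have "of_nat j * x - of_int i \<in> P"
    using total[OF diff_mem[OF of_int_mem[of i] mult_mem[OF of_nat_mem[of j] x]]] by simp
  from of_int_le_ord_val[OF j x this] less show False by simp
qed

lemma ord_val_eqI:
  assumes x: "x \<in> A"
    and lower: "\<And>i j. j > 0 \<Longrightarrow> of_nat j * x - of_int i \<in> P \<Longrightarrow> of_int i \<le> real j * z"
    and upper: "\<And>i j. j > 0 \<Longrightarrow> of_int i - of_nat j * x \<in> P \<Longrightarrow> real j * z \<le> of_int i"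
  shows "ord_val x = z"
proof (rule ccontr)
  assume ne: "ord_val x \<noteq> z"
  obtain N :: nat where "1 / \<bar>z - ord_val x\<bar> < real N"
    using reals_Archimedean2 by blast
  then have N: "1 < real N * \<bar>z - ord_val x\<bar>" "N > 0"
    using ne by (auto simp: divide_less_eq intro: Nat.gr0I)
  \<comment> \<open>An integer strictly between \<open>N z\<close> and \<open>N ord_val x\<close> contradicts one of the bounds.\<close>
  show False
  proof (cases "ord_val x < z")
    case True
    define i where "i = \<lfloor>real N * ord_val x\<rfloor> + 1"
    have lt: "real N * ord_val x < of_int i" and "of_int i < real N * z"
      using N True unfolding i_def by (simp_all add: algebra_simps) linarith+
    then show False
      using upper[OF N(2) in_P_if_ord_val_less_of_int[OF N(2) x lt]] by simp
  next
    case False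
    define i where "i = \<lfloor>real N * z\<rfloor> + 1"
    have "real N * z < of_int i" and lt: "of_int i < real N * ord_val x"
      using N False ne unfolding i_def by (simp_all add: algebra_simps) linarith+
    then show False
      using lower[OF N(2) in_P_if_of_int_less_ord_val[OF N(2) x lt]] by simp
  qed
qed

lemma ord_val_of_int: "ord_val (of_int k) = of_int k"
proof (rule ord_val_eqI[OF of_int_mem])
  fix i :: int and j :: nat
  show "of_int i \<le> real j * of_int k" if "of_nat j * of_int k - of_int i \<in> P"
  proof -
    have "of_int (int j * k - i) \<in> P" using that by simp
    then have "i \<le> int j * k" unfolding of_int_in_P_iff by simp
    then show ?thesis by (metis of_int_le_iff of_int_mult of_int_of_nat_eq)
  qed
  show "real j * of_int k \<le> of_int i" if "of_int i - of_nat j * of_int k \<in> P"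
  proof -
    have "of_int (i - int j * k) \<in> P" using that by simp
    then have "int j * k \<le> i" unfolding of_int_in_P_iff by simp
    then show ?thesis by (metis of_int_le_iff of_int_mult of_int_of_nat_eq)
  qed
qed

lemma ord_val_of_nat: "ord_val (of_nat n) = real n"
  using ord_val_of_int[of "int n"] by simp

lemma ord_val_uminus: "x \<in> A \<Longrightarrow> ord_val (- x) = - ord_val x"
proof (rule ord_val_eqI[OF uminus_mem])
  assume x: "x \<in> A"
  fix i :: int and j :: nat
  assume j: "j > 0"
  show "of_int i \<le> real j * - ord_val x" if "of_nat j * - x - of_int i \<in> P"
  proof -
    have "of_int (- i) - of_nat j * x = of_nat j * - x - of_int i"
      by (simp add: algebra_simps)
    then have "of_int (- i) - of_nat j * x \<in> P"
      using that by metis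
    from ord_val_le_of_int[OF j x this] show ?thesis by simp
  qed
  show "real j * - ord_val x \<le> of_int i" if "of_int i - of_nat j * - x \<in> P"
    using of_int_le_ord_val[OF j x, of "- i"] that by (simp add: algebra_simps)
qed

lemma ord_val_add_le:
  assumes x: "x \<in> A" and y: "y \<in> A"
  shows "ord_val (x + y) \<le> ord_val x + ord_val y"
proof (rule le_if_le_add_divide_nat[where c = 2])
  fix M :: nat
  assume "M \<ge> 1"
  then have M: "M > 0" by simp
  define i1 where "i1 = \<lfloor>real M * ord_val x\<rfloor> + 1"
  define i2 where "i2 = \<lfloor>real M * ord_val y\<rfloor> + 1"
  have "of_int i1 - of_nat M * x \<in> P"
    by (rule in_P_if_ord_val_less_of_int[OF M x]) (unfold i1_def, linarith)
  moreover have "of_int i2 - of_nat M * y \<in> P"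
    by (rule in_P_if_ord_val_less_of_int[OF M y]) (unfold i2_def, linarith)
  ultimately have "of_int (i1 + i2) - of_nat M * (x + y) \<in> P"
    using P_add by (fastforce simp: algebra_simps)
  then have "real M * ord_val (x + y) \<le> of_int (i1 + i2)"
    by (rule ord_val_le_of_int[OF M add_mem[OF x y]])
  also have "\<dots> \<le> real M * (ord_val x + ord_val y) + 2"
    unfolding i1_def i2_def by (simp add: algebra_simps) linarith
  finally show "ord_val (x + y) \<le> ord_val x + ord_val y + 2 / real M"
    using M by (simp add: field_simps)
qed

lemma ord_val_add:
  assumes x: "x \<in> A" and y: "y \<in> A"
  shows "ord_val (x + y) = ord_val x + ord_val y"
proof -
  have "ord_val x = ord_val ((x + y) + - y)" by simp
  also have "\<dots> \<le> ord_val (x + y) + ord_val (- y)"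
    using ord_val_add_le add_mem uminus_mem x y by blast
  finally show ?thesis
    using ord_val_add_le[OF x y] ord_val_uminus[OF y] by simp
qed

lemma ord_val_of_nat_mult: "x \<in> A \<Longrightarrow> ord_val (of_nat n * x) = real n * ord_val x"
proof (induct n)
  case 0
  then show ?case using ord_val_of_int[of 0] by simp
next
  case (Suc n)
  have "ord_val (of_nat (Suc n) * x) = ord_val (x + of_nat n * x)"
    by (simp add: algebra_simps)
  also have "\<dots> = ord_val x + ord_val (of_nat n * x)"
    using ord_val_add Suc mult_mem of_nat_mem by blast
  finally show ?case using Suc by (simp add: algebra_simps)
qed

lemma ord_val_nonneg: "x \<in> P \<Longrightarrow> ord_val x \<ge> 0"
  using of_int_le_ord_val[of 1 x 0] P_subset by auto

lemma in_P_if_ord_val_pos: "x \<in> A \<Longrightarrow> ord_val x > 0 \<Longrightarrow> x \<in> P"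
  using in_P_if_of_int_less_ord_val[of 1 x 0] by auto

lemma ord_val_mult_le_if_pos:
  assumes x: "x \<in> A" and y: "y \<in> A" and pos: "ord_val x > 0" "ord_val y > 0"
  shows "ord_val (x * y) \<le> ord_val x * ord_val y"
proof (rule le_if_le_add_divide_nat[where c = "ord_val x + ord_val y + 1"])
  fix M :: nat
  assume M1: "M \<ge> 1"
  then have M: "M > 0" by simp
  define i1 where "i1 = \<lfloor>real M * ord_val x\<rfloor> + 1"
  define i2 where "i2 = \<lfloor>real M * ord_val y\<rfloor> + 1"
  have Mx: "real M * ord_val x > 0" and My: "real M * ord_val y > 0"
    using M pos by simp_all
  have x_below: "of_int i1 - of_nat M * x \<in> P"
    by (rule in_P_if_ord_val_less_of_int[OF M x]) (unfold i1_def, linarith)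
  have y_below: "of_int i2 - of_nat M * y \<in> P"
    by (rule in_P_if_ord_val_less_of_int[OF M y]) (unfold i2_def, linarith)
  have i2: "of_int i2 \<in> P"
    unfolding of_int_in_P_iff i2_def using My by linarith
  have Mx_P: "of_nat M * x \<in> P"
    using P_mult[OF of_nat_in_P in_P_if_ord_val_pos[OF x pos(1)]] .
  have "(of_int i1 - of_nat M * x) * of_int i2 + (of_nat M * x) * (of_int i2 - of_nat M * y) \<in> P"
    by (rule P_add[OF P_mult[OF x_below i2] P_mult[OF Mx_P y_below]])
  moreover have "(of_int i1 - of_nat M * x) * of_int i2 + (of_nat M * x) * (of_int i2 - of_nat M * y)
      = of_int (i1 * i2) - of_nat (M * M) * (x * y)"
    by (simp add: algebra_simps)
  ultimately have "of_int (i1 * i2) - of_nat (M * M) * (x * y) \<in> P"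
    by simp
  from ord_val_le_of_int[OF _ mult_mem[OF x y] this] M
  have "real (M * M) * ord_val (x * y) \<le> of_int (i1 * i2)"
    by simp
  also have "\<dots> \<le> (real M * ord_val x + 1) * (real M * ord_val y + 1)"
    unfolding of_int_mult by (rule mult_mono) (use Mx My in \<open>unfold i1_def i2_def, linarith+\<close>)
  also have "\<dots> \<le> real M * real M * (ord_val x * ord_val y) + real M * (ord_val x + ord_val y + 1)"
    using M1 by (simp add: algebra_simps)
  finally show "ord_val (x * y) \<le> ord_val x * ord_val y + (ord_val x + ord_val y + 1) / real M"
    using M1 by (intro le_add_divide_if_square_mult_le) (simp_all add: algebra_simps)
qed

lemma ord_val_mult_ge_if_pos:
  assumes x: "x \<in> A" and y: "y \<in> A" and pos: "ord_val x > 0" "ord_val y > 0"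
  shows "ord_val x * ord_val y \<le> ord_val (x * y)"
proof (rule le_if_le_add_divide_nat[where c = "ord_val x + ord_val y"])
  fix M :: nat
  assume M1: "M \<ge> 1"
  then have M: "M > 0" by simp
  define i1 where "i1 = \<lceil>real M * ord_val x\<rceil> - 1"
  define i2 where "i2 = \<lceil>real M * ord_val y\<rceil> - 1"
  have Mx: "real M * ord_val x > 0" and My: "real M * ord_val y > 0"
    using M pos by simp_all
  have i_nonneg: "i1 \<ge> 0" "i2 \<ge> 0"
    using Mx My unfolding i1_def i2_def by linarith+
  have x_above: "of_nat M * x - of_int i1 \<in> P"
    by (rule in_P_if_of_int_less_ord_val[OF M x]) (unfold i1_def, linarith)
  have y_above: "of_nat M * y - of_int i2 \<in> P"
    by (rule in_P_if_of_int_less_ord_val[OF M y]) (unfold i2_def, linarith)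
  have i1: "of_int i1 \<in> P" and i2: "of_int i2 \<in> P"
    using i_nonneg of_int_in_P_iff by auto
  have "(of_nat M * x - of_int i1) * (of_nat M * y - of_int i2)
      + of_int i2 * (of_nat M * x - of_int i1) + of_int i1 * (of_nat M * y - of_int i2) \<in> P"
    by (rule P_add[OF P_add[OF P_mult[OF x_above y_above] P_mult[OF i2 x_above]] P_mult[OF i1 y_above]])
  moreover have "(of_nat M * x - of_int i1) * (of_nat M * y - of_int i2)
      + of_int i2 * (of_nat M * x - of_int i1) + of_int i1 * (of_nat M * y - of_int i2)
      = of_nat (M * M) * (x * y) - of_int (i1 * i2)"
    by (simp add: algebra_simps)
  ultimately have "of_nat (M * M) * (x * y) - of_int (i1 * i2) \<in> P"
    by simp
  from of_int_le_ord_val[OF _ mult_mem[OF x y] this] M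
  have "of_int (i1 * i2) \<le> real (M * M) * ord_val (x * y)"
    by simp
  moreover have "real M * ord_val x * (real M * ord_val y) - real M * ord_val x - real M * ord_val y
      \<le> of_int i1 * of_int i2"
    by (rule mult_ge_if_ge_diff_one) (use i_nonneg Mx My in \<open>unfold i1_def i2_def, linarith+\<close>)
  ultimately have "real M * real M * (ord_val x * ord_val y)
      \<le> real M * real M * ord_val (x * y) + real M * (ord_val x + ord_val y)"
    by (simp add: algebra_simps)
  then show "ord_val x * ord_val y \<le> ord_val (x * y) + (ord_val x + ord_val y) / real M"
    using M1 by (intro le_add_divide_if_square_mult_le) simp_all
qed

lemma ord_val_mult:
  assumes x: "x \<in> A" and y: "y \<in> A"
  shows "ord_val (x * y) = ord_val x * ord_val y"
proof -
  \<comment> \<open>Reduce to the positive case by shifting both factors by an integer \<open>n\<close>.\<close>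
  define n where "n = nat \<lceil>\<bar>ord_val x\<bar> + \<bar>ord_val y\<bar>\<rceil> + 1"
  have n: "real n > \<bar>ord_val x\<bar> + \<bar>ord_val y\<bar>"
    unfolding n_def by linarith
  have xn: "x + of_nat n \<in> A" and yn: "y + of_nat n \<in> A"
    using x y add_mem of_nat_mem by auto
  have val_shift: "ord_val (z + of_nat n) = ord_val z + real n" if "z \<in> A" for z
    using ord_val_add[OF that of_nat_mem] ord_val_of_nat by simp
  have pos: "ord_val (x + of_nat n) > 0" "ord_val (y + of_nat n) > 0"
    using val_shift x y n by auto
  have "(ord_val x + real n) * (ord_val y + real n) = ord_val (x + of_nat n) * ord_val (y + of_nat n)"
    using val_shift x y by simp
  also have "\<dots> = ord_val ((x + of_nat n) * (y + of_nat n))"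
    using pos by (intro order_antisym ord_val_mult_le_if_pos[OF xn yn] ord_val_mult_ge_if_pos[OF xn yn])
  also have "\<dots> = ord_val (x * y + (of_nat n * x + (of_nat n * y + of_nat (n * n))))"
    by (rule arg_cong[where f = ord_val]) (simp add: algebra_simps)
  also have "\<dots> = ord_val (x * y) + (real n * ord_val x + (real n * ord_val y + real (n * n)))"
    using x y
    by (simp only: ord_val_add mult_mem add_mem of_nat_mem ord_val_of_nat_mult ord_val_of_nat)
  finally show ?thesis
    by (simp add: algebra_simps)
qed

lemma character_ord_val: "character ord_val"
  unfolding character_def
proof (intro conjI ballI)
  fix x y assume "x \<in> A" "y \<in> A"
  then show "ord_val (x + y) = ord_val x + ord_val y" and "ord_val (x * y) = ord_val x * ord_val y"
    by (simp_all add: ord_val_add ord_val_mult)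
next
  show "ord_val 1 = 1"
    using ord_val_of_nat[of 1] by simp
next
  fix t assume "t \<in> T"
  then show "ord_val t \<ge> 0"
    using cone_subset_P ord_val_nonneg by blast
qed

end

context archimedean_preordering
begin

lemma preordering_adjoin:
  assumes P: "preordering P" and x: "x \<in> A"
  shows "preordering {p + x * q | p q. p \<in> P \<and> q \<in> P}" (is "preordering ?Q")
proof -
  have P_subset: "P \<subseteq> A" and cone_subset_P: "T \<subseteq> P"
    and P_add: "\<And>a b. a \<in> P \<Longrightarrow> b \<in> P \<Longrightarrow> a + b \<in> P"
    and P_mult: "\<And>a b. a \<in> P \<Longrightarrow> b \<in> P \<Longrightarrow> a * b \<in> P"
    using P by (auto simp: preordering_def)
  have P0: "0 \<in> P" and xx: "x * x \<in> P"
    using zero_in_cone square_in_cone[OF x] cone_subset_P by auto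
  have "T \<subseteq> ?Q"
  proof
    fix t assume "t \<in> T"
    then have "t \<in> P" "t = t + x * 0"
      using cone_subset_P by auto
    then show "t \<in> ?Q" using P0 by blast
  qed
  moreover have "?Q \<subseteq> A"
  proof
    fix a assume "a \<in> ?Q"
    then obtain p q where "a = p + x * q" "p \<in> P" "q \<in> P" by blast
    then show "a \<in> A" using P_subset x add_mem mult_mem by blast
  qed
  moreover have "a + b \<in> ?Q \<and> a * b \<in> ?Q" if a_mem: "a \<in> ?Q" and b_mem: "b \<in> ?Q" for a b
  proof -
    obtain p1 q1 p2 q2 where a: "a = p1 + x * q1" "p1 \<in> P" "q1 \<in> P"
      and b: "b = p2 + x * q2" "p2 \<in> P" "q2 \<in> P"
      using a_mem b_mem by blast
    have "a + b = (p1 + p2) + x * (q1 + q2)"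
      using a b by (simp add: algebra_simps)
    moreover have "p1 + p2 \<in> P" "q1 + q2 \<in> P"
      using a b P_add by auto
    ultimately have "a + b \<in> ?Q" by blast
    have "a * b = (p1 * p2 + (x * x) * (q1 * q2)) + x * (p1 * q2 + q1 * p2)"
      using a b by (simp add: algebra_simps)
    moreover have "p1 * p2 + (x * x) * (q1 * q2) \<in> P" "p1 * q2 + q1 * p2 \<in> P"
      using a b xx P_add P_mult by auto
    ultimately have "a * b \<in> ?Q" by blast
    with \<open>a + b \<in> ?Q\<close> show ?thesis ..
  qed
  ultimately show ?thesis
    by (simp add: preordering_def)
qed

lemma exists_maximal_preordering:
  assumes "preordering S" and "- 1 \<notin> S"
  obtains P where "preordering P" "S \<subseteq> P" "- 1 \<notin> P"
    "\<And>Q. preordering Q \<Longrightarrow> P \<subseteq> Q \<Longrightarrow> - 1 \<notin> Q \<Longrightarrow> Q = P"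
proof -
  define \<P> where "\<P> = {P. preordering P \<and> S \<subseteq> P \<and> - 1 \<notin> P}"
  have "\<exists>P\<in>\<P>. \<forall>Q\<in>\<P>. P \<subseteq> Q \<longrightarrow> Q = P"
  proof (rule subset_Zorn_nonempty)
    show "\<P> \<noteq> {}"
      using assms unfolding \<P>_def by blast
  next
    fix \<C> assume "\<C> \<noteq> {}" and "subset.chain \<P> \<C>"
    then obtain P0 where P0: "P0 \<in> \<C>" and \<C>: "\<C> \<subseteq> \<P>"
      and chain: "\<forall>X\<in>\<C>. \<forall>Y\<in>\<C>. X \<subseteq> Y \<or> Y \<subseteq> X"
      by (auto simp: subset_chain_def)
    have member: "preordering X" "S \<subseteq> X" "- 1 \<notin> X" if "X \<in> \<C>" for X
      using that \<C> unfolding \<P>_def by auto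
    have "preordering (\<Union>\<C>)"
      unfolding preordering_def
    proof (intro conjI ballI)
      show "T \<subseteq> \<Union>\<C>"
        using member(1)[OF P0] P0 unfolding preordering_def by blast
      show "\<Union>\<C> \<subseteq> A"
        using member(1) unfolding preordering_def by blast
      fix a b assume "a \<in> \<Union>\<C>" "b \<in> \<Union>\<C>"
      then obtain X Y where "a \<in> X" "X \<in> \<C>" "b \<in> Y" "Y \<in> \<C>" by blast
      then obtain Z where Z: "Z \<in> \<C>" "a \<in> Z" "b \<in> Z"
        using chain by blast
      then show "a + b \<in> \<Union>\<C>" "a * b \<in> \<Union>\<C>"
        using member(1)[OF Z(1)] unfolding preordering_def by blast+
    qed
    moreover have "S \<subseteq> \<Union>\<C>"
      using member(2)[OF P0] P0 by blast
    moreover have "- 1 \<notin> \<Union>\<C>"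
      using member(3) by blast
    ultimately show "\<Union>\<C> \<in> \<P>"
      unfolding \<P>_def by blast
  qed
  then obtain P where "P \<in> \<P>" and maximal: "\<And>Q. Q \<in> \<P> \<Longrightarrow> P \<subseteq> Q \<Longrightarrow> Q = P"
    by blast
  then have P: "preordering P" "S \<subseteq> P" "- 1 \<notin> P"
    unfolding \<P>_def by auto
  show ?thesis
  proof (rule that[OF P])
    fix Q assume "preordering Q" "P \<subseteq> Q" "- 1 \<notin> Q"
    then show "Q = P"
      using maximal P(2) unfolding \<P>_def by blast
  qed
qed

lemma minus_one_in_adjoin_if_maximal:
  assumes P: "preordering P"
    and maximal: "\<And>Q. preordering Q \<Longrightarrow> P \<subseteq> Q \<Longrightarrow> - 1 \<notin> Q \<Longrightarrow> Q = P"
    and z: "z \<in> A" "z \<notin> P"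
  shows "\<exists>p q. p \<in> P \<and> q \<in> P \<and> - 1 = p + z * q"
proof (rule ccontr)
  let ?Q = "{p + z * q | p q. p \<in> P \<and> q \<in> P}"
  assume "\<not> ?thesis"
  then have "- 1 \<notin> ?Q" by blast
  have P0: "0 \<in> P" and P1: "1 \<in> P"
    using P zero_in_cone one_in_cone unfolding preordering_def by auto
  have "P \<subseteq> ?Q"
  proof
    fix p assume "p \<in> P"
    moreover have "p = p + z * 0" by simp
    ultimately show "p \<in> ?Q" using P0 by blast
  qed
  then have "?Q = P"
    using maximal preordering_adjoin[OF P z(1)] \<open>- 1 \<notin> ?Q\<close> by blast
  moreover have "z = 0 + z * 1" by simp
  then have "z \<in> ?Q"
    using P0 P1 by blast
  ultimately show False using z(2) by blast
qed

lemma maximal_preordering_total: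
  assumes P: "preordering P" and "- 1 \<notin> P"
    and maximal: "\<And>Q. preordering Q \<Longrightarrow> P \<subseteq> Q \<Longrightarrow> - 1 \<notin> Q \<Longrightarrow> Q = P"
    and x: "x \<in> A"
  shows "x \<in> P \<or> - x \<in> P"
proof (rule ccontr)
  have P_add: "\<And>a b. a \<in> P \<Longrightarrow> b \<in> P \<Longrightarrow> a + b \<in> P"
    and P_mult: "\<And>a b. a \<in> P \<Longrightarrow> b \<in> P \<Longrightarrow> a * b \<in> P" and xx: "x * x \<in> P"
    using P square_in_cone[OF x] by (auto simp: preordering_def)
  assume "\<not> ?thesis"
  then obtain p1 q1 p2 q2 where
    pq: "p1 \<in> P" "q1 \<in> P" "p2 \<in> P" "q2 \<in> P"
    and eq1: "- 1 = p1 + x * q1" and eq2: "- 1 = p2 + (- x) * q2"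
    using minus_one_in_adjoin_if_maximal[OF P maximal] x uminus_mem[OF x] by blast
  have xq1: "x * q1 = - 1 - p1"
    using eq1 by (simp add: algebra_simps)
  have xq2: "x * q2 = 1 + p2"
    using eq2 by (simp add: algebra_simps)
  have "p1 + p2 + p1 * p2 + (x * x) * (q1 * q2) = p1 + p2 + p1 * p2 + (x * q1) * (x * q2)"
    by (simp add: algebra_simps)
  also have "\<dots> = - 1"
    unfolding xq1 xq2 by (simp add: algebra_simps)
  finally have "p1 + p2 + p1 * p2 + (x * x) * (q1 * q2) = - 1" .
  moreover have "p1 + p2 + p1 * p2 + (x * x) * (q1 * q2) \<in> P"
    by (rule P_add[OF P_add[OF P_add[OF pq(1,3)] P_mult[OF pq(1,3)]] P_mult[OF xx P_mult[OF pq(2,4)]]])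
  ultimately show False
    using \<open>- 1 \<notin> P\<close> by simp
qed

theorem character_nonpos_if_not_in_cone:
  assumes c: "c \<in> A" and "c \<notin> T"
  obtains \<psi> where "character \<psi>" "\<psi> c \<le> 0"
proof -
  define S where "S = {t1 + (- c) * t2 | t1 t2. t1 \<in> T \<and> t2 \<in> T}"
  have "preordering S"
    unfolding S_def by (rule preordering_adjoin[OF preordering_cone uminus_mem[OF c]])
  moreover have "- 1 \<notin> S"
  proof
    assume "- 1 \<in> S"
    then obtain t1 t2 where t: "t1 \<in> T" "t2 \<in> T" and "- 1 = t1 + (- c) * t2"
      unfolding S_def by blast
    then have "c * t2 = 1 + t1"
      by (simp add: algebra_simps)
    then show False
      using in_cone_if_mult_eq_one_plus[OF c _ _] t \<open>c \<notin> T\<close> by blast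
  qed
  ultimately obtain P where P: "preordering P" "S \<subseteq> P" "- 1 \<notin> P"
    and maximal: "\<And>Q. preordering Q \<Longrightarrow> P \<subseteq> Q \<Longrightarrow> - 1 \<notin> Q \<Longrightarrow> Q = P"
    by (rule exists_maximal_preordering) (rule that)
  interpret ordering: archimedean_ordering A T P
    using P(1,3) maximal_preordering_total[OF P(1,3) maximal]
    by unfold_locales auto
  have "- c = 0 + (- c) * 1"
    by simp
  then have "- c \<in> P"
    using P(2) zero_in_cone one_in_cone unfolding S_def by blast
  then have "ordering.ord_val c \<le> 0"
    using ordering.ord_val_nonneg ordering.ord_val_uminus[OF c] by fastforce
  moreover note ordering.character_ord_val
  ultimately show ?thesis
    using that by blast
qed

corollary in_cone_if_characters_pos:
  assumes "c \<in> A" and "\<And>\<psi>. character \<psi> \<Longrightarrow> \<psi> c > 0"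
  shows "c \<in> T"
proof (rule ccontr)
  assume "c \<notin> T"
  then obtain \<psi> where "character \<psi>" "\<psi> c \<le> 0"
    using character_nonpos_if_not_in_cone[OF assms(1)] by blast
  then show False
    using assms(2) by fastforce
qed

end

section \<open>Bounded fractions of a localizable ring\<close>

locale localizable_ring =
  fixes le :: "'a::comm_ring_1 \<Rightarrow> 'a \<Rightarrow> bool"
  assumes po_comm_ring: "po_comm_ring le"
    and localizable: "localizable le"
    and of_nat_Loc: "n \<ge> 1 \<Longrightarrow> (of_nat n :: 'a) \<in> Loc le"
begin

abbreviation nonneg :: "'a \<Rightarrow> bool" where
  "nonneg r \<equiv> le 0 r"

lemma po_le_antisym: "le r s \<Longrightarrow> le s r \<Longrightarrow> r = s"
  and po_le_trans: "le r s \<Longrightarrow> le s t \<Longrightarrow> le r t"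
  and po_le_add_right: "le r s \<Longrightarrow> le (r + t) (s + t)"
  and nonneg_mult: "nonneg r \<Longrightarrow> nonneg s \<Longrightarrow> nonneg (r * s)"
  and nonneg_square: "nonneg (r * r)"
  using po_comm_ring unfolding po_comm_ring_def by blast+

lemma le_iff_nonneg_diff: "le a b \<longleftrightarrow> nonneg (b - a)"
  using po_le_add_right[of a b "- a"] po_le_add_right[of 0 "b - a" a] by auto

lemma nonneg_add: "nonneg a \<Longrightarrow> nonneg b \<Longrightarrow> nonneg (a + b)"
  using po_le_add_right[of 0 a b] po_le_trans by (simp add: add.commute)

lemma nonneg_one: "nonneg 1"
  using nonneg_square[of 1] by simp

lemma nonneg_of_nat: "nonneg (of_nat n)"
  using nonneg_square[of 0] by (induct n) (auto simp: nonneg_one nonneg_add)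

lemma nonneg_antisym: "nonneg a \<Longrightarrow> nonneg (- a) \<Longrightarrow> a = 0"
  using le_iff_nonneg_diff[of a 0] po_le_antisym by simp

lemma Loc_nonneg: "s \<in> Loc le \<Longrightarrow> nonneg s"
  unfolding Loc_def using nonneg_add[OF _ nonneg_one, of "s - 1"] by simp

lemma Loc_reflects_nonneg: "s \<in> Loc le \<Longrightarrow> nonneg (r * s) \<Longrightarrow> nonneg r"
  unfolding Loc_def by blast

lemma Loc_mult:
  assumes s: "s \<in> Loc le" and t: "t \<in> Loc le"
  shows "s * t \<in> Loc le"
proof -
  have st: "nonneg (s - 1)" "nonneg (t - 1)"
    using s t unfolding Loc_def by auto
  have "s * t - 1 = (s - 1) * (t - 1) + (s - 1) + (t - 1)"
    by (simp add: algebra_simps)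
  also have "nonneg \<dots>"
    by (rule nonneg_add[OF nonneg_add[OF nonneg_mult[OF st] st(1)] st(2)])
  finally have "nonneg (s * t - 1)" .
  moreover have "nonneg r" if "nonneg (r * (s * t))" for r
  proof -
    have "nonneg ((r * s) * t)"
      using that by (simp add: mult.assoc)
    then show ?thesis
      using Loc_reflects_nonneg[OF s] Loc_reflects_nonneg[OF t] by blast
  qed
  ultimately show ?thesis
    unfolding Loc_def by blast
qed

lemma Loc_non_zero_divisor:
  assumes s: "s \<in> Loc le"
  shows "non_zero_divisor s"
  unfolding non_zero_divisor_def
proof (intro allI impI)
  fix x assume "x * s = 0"
  then have "nonneg (x * s)" "nonneg ((- x) * s)"
    using nonneg_square[of 0] by simp_all
  then show "x = 0"
    using Loc_reflects_nonneg[OF s] nonneg_antisym by blast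
qed

lemma one_Loc: "1 \<in> Loc le"
  using of_nat_Loc[of 1] by simp

lemma nonneg_if_nonneg_double: "nonneg (x + x) \<Longrightarrow> nonneg x"
  using Loc_reflects_nonneg[OF of_nat_Loc[of 2]] by (simp add: mult_2_right)

definition bounded_by :: "'a \<Rightarrow> 'a \<Rightarrow> nat \<Rightarrow> bool" where
  "bounded_by r s n \<longleftrightarrow> nonneg (of_nat n * s - r) \<and> nonneg (of_nat n * s + r)"

lemma mem_bd_fracs_iff: "(r, s) \<in> bd_fracs le \<longleftrightarrow> s \<in> Loc le \<and> (\<exists>n. bounded_by r s n)"
proof -
  have "frac_le le (- of_nat n, 1) (r, s) \<longleftrightarrow> nonneg (of_nat n * s + r)" for n
    unfolding frac_le_def using le_iff_nonneg_diff[of "- of_nat n * s" r] by (simp add: add.commute)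
  moreover have "frac_le le (r, s) (of_nat n, 1) \<longleftrightarrow> nonneg (of_nat n * s - r)" for n
    unfolding frac_le_def using le_iff_nonneg_diff[of r "of_nat n * s"] by simp
  ultimately show ?thesis
    unfolding bd_fracs_def bounded_by_def by auto
qed

lemma bd_fracs_non_zero_divisor: "(r, s) \<in> bd_fracs le \<Longrightarrow> non_zero_divisor s"
  using mem_bd_fracs_iff Loc_non_zero_divisor by blast

lemma bd_fracs_add:
  assumes "(r, s) \<in> bd_fracs le" and "(r', s') \<in> bd_fracs le"
  shows "(r * s' + r' * s, s * s') \<in> bd_fracs le"
proof -
  obtain n n' where s: "s \<in> Loc le" "bounded_by r s n" and s': "s' \<in> Loc le" "bounded_by r' s' n'"
    using assms mem_bd_fracs_iff by blast
  have ss': "nonneg s" "nonneg s'"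
    using s s' Loc_nonneg by auto
  have b: "nonneg (of_nat n * s - r)" "nonneg (of_nat n * s + r)"
    "nonneg (of_nat n' * s' - r')" "nonneg (of_nat n' * s' + r')"
    using s s' unfolding bounded_by_def by auto
  have "of_nat (n + n') * (s * s') - (r * s' + r' * s)
      = (of_nat n * s - r) * s' + (of_nat n' * s' - r') * s"
    and "of_nat (n + n') * (s * s') + (r * s' + r' * s)
      = (of_nat n * s + r) * s' + (of_nat n' * s' + r') * s"
    by (simp_all add: algebra_simps)
  moreover have "nonneg ((of_nat n * s - r) * s' + (of_nat n' * s' - r') * s)"
    by (rule nonneg_add[OF nonneg_mult[OF b(1) ss'(2)] nonneg_mult[OF b(3) ss'(1)]])
  moreover have "nonneg ((of_nat n * s + r) * s' + (of_nat n' * s' + r') * s)"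
    by (rule nonneg_add[OF nonneg_mult[OF b(2) ss'(2)] nonneg_mult[OF b(4) ss'(1)]])
  ultimately have "bounded_by (r * s' + r' * s) (s * s') (n + n')"
    unfolding bounded_by_def by simp
  then show ?thesis
    using mem_bd_fracs_iff Loc_mult s s' by blast
qed

lemma bd_fracs_mult:
  assumes "(r, s) \<in> bd_fracs le" and "(r', s') \<in> bd_fracs le"
  shows "(r * r', s * s') \<in> bd_fracs le"
proof -
  obtain n n' where s: "s \<in> Loc le" "bounded_by r s n" and s': "s' \<in> Loc le" "bounded_by r' s' n'"
    using assms mem_bd_fracs_iff by blast
  have b: "nonneg (of_nat n * s - r)" "nonneg (of_nat n * s + r)"
    "nonneg (of_nat n' * s' - r')" "nonneg (of_nat n' * s' + r')"
    using s s' unfolding bounded_by_def by auto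
  have "(of_nat (n * n') * (s * s') - r * r') + (of_nat (n * n') * (s * s') - r * r')
      = (of_nat n * s - r) * (of_nat n' * s' + r') + (of_nat n * s + r) * (of_nat n' * s' - r')"
    by (simp add: algebra_simps)
  also have "nonneg \<dots>"
    by (rule nonneg_add[OF nonneg_mult[OF b(1,4)] nonneg_mult[OF b(2,3)]])
  finally have "nonneg (of_nat (n * n') * (s * s') - r * r')"
    by (rule nonneg_if_nonneg_double)
  have "(of_nat (n * n') * (s * s') + r * r') + (of_nat (n * n') * (s * s') + r * r')
      = (of_nat n * s - r) * (of_nat n' * s' - r') + (of_nat n * s + r) * (of_nat n' * s' + r')"
    by (simp add: algebra_simps)
  also have "nonneg \<dots>"
    by (rule nonneg_add[OF nonneg_mult[OF b(1,3)] nonneg_mult[OF b(2,4)]])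
  finally have "nonneg (of_nat (n * n') * (s * s') + r * r')"
    by (rule nonneg_if_nonneg_double)
  with \<open>nonneg (of_nat (n * n') * (s * s') - r * r')\<close>
  have "bounded_by (r * r') (s * s') (n * n')"
    unfolding bounded_by_def by blast
  then show ?thesis
    using mem_bd_fracs_iff Loc_mult s s' by blast
qed

lemma bd_fracs_uminus: "(r, s) \<in> bd_fracs le \<Longrightarrow> (- r, s) \<in> bd_fracs le"
  unfolding mem_bd_fracs_iff bounded_by_def by auto

lemma bd_fracs_of_nat: "(of_nat k, 1) \<in> bd_fracs le"
proof -
  have "bounded_by (of_nat k) 1 (k + k)"
    unfolding bounded_by_def using nonneg_of_nat[of k] nonneg_of_nat[of "k + k + k"]
    by (simp add: algebra_simps)
  then show ?thesis
    using mem_bd_fracs_iff one_Loc by blast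
qed

lemma bd_fracs_inverse_Loc:
  assumes s: "s \<in> Loc le"
  shows "(1, s) \<in> bd_fracs le"
proof -
  have "nonneg (s - 1)"
    using s unfolding Loc_def by blast
  moreover have "nonneg (s + 1)"
    using nonneg_add[OF Loc_nonneg[OF s] nonneg_one] .
  ultimately have "bounded_by 1 s 1"
    unfolding bounded_by_def by simp
  then show ?thesis
    using mem_bd_fracs_iff s by blast
qed

lemma bd_fracs_if_le:
  assumes "t \<in> Loc le" and "le (- t) r" and "le r t"
  shows "(r, t) \<in> bd_fracs le"
proof -
  have "bounded_by r t 1"
    using assms(2,3) le_iff_nonneg_diff[of "- t" r] le_iff_nonneg_diff[of r t]
    unfolding bounded_by_def by (simp add: add.commute)
  then show ?thesis
    using assms(1) mem_bd_fracs_iff by blast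
qed

(* R_loc^bd as a subring of the total ring of fractions; this is faithful because elements of
   Loc(R) are non-zero-divisors (Loc_non_zero_divisor). *)
definition bd_ring :: "'a fraction set" where
  "bd_ring = {Fraction r s | r s. (r, s) \<in> bd_fracs le}"

definition bd_cone :: "'a fraction set" where
  "bd_cone = {Fraction r s | r s. (r, s) \<in> bd_fracs le \<and> nonneg r}"

lemma Fraction_in_bd_ring: "(r, s) \<in> bd_fracs le \<Longrightarrow> Fraction r s \<in> bd_ring"
  unfolding bd_ring_def by blast

lemma bd_ringE:
  assumes "x \<in> bd_ring"
  obtains r s where "x = Fraction r s" "(r, s) \<in> bd_fracs le"
  using assms unfolding bd_ring_def by blast

lemma bd_coneE:
  assumes "x \<in> bd_cone"
  obtains r s where "x = Fraction r s" "(r, s) \<in> bd_fracs le" "nonneg r"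
  using assms unfolding bd_cone_def by blast

lemma Fraction_in_bd_cone: "(r, s) \<in> bd_fracs le \<Longrightarrow> nonneg r \<Longrightarrow> Fraction r s \<in> bd_cone"
  unfolding bd_cone_def by blast

lemma bd_Fraction_add:
  "(r, s) \<in> bd_fracs le \<Longrightarrow> (r', s') \<in> bd_fracs le \<Longrightarrow>
     Fraction r s + Fraction r' s' = Fraction (r * s' + r' * s) (s * s')"
  using bd_fracs_non_zero_divisor by simp

lemma bd_Fraction_mult:
  "(r, s) \<in> bd_fracs le \<Longrightarrow> (r', s') \<in> bd_fracs le \<Longrightarrow>
     Fraction r s * Fraction r' s' = Fraction (r * r') (s * s')"
  using bd_fracs_non_zero_divisor by simp

lemma bd_Fraction_uminus: "(r, s) \<in> bd_fracs le \<Longrightarrow> - Fraction r s = Fraction (- r) s"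
  using bd_fracs_non_zero_divisor by simp

lemma bd_ring_add: "x \<in> bd_ring \<Longrightarrow> y \<in> bd_ring \<Longrightarrow> x + y \<in> bd_ring"
  by (elim bd_ringE) (simp add: bd_Fraction_add bd_fracs_add Fraction_in_bd_ring)

lemma bd_ring_mult: "x \<in> bd_ring \<Longrightarrow> y \<in> bd_ring \<Longrightarrow> x * y \<in> bd_ring"
  by (elim bd_ringE) (simp add: bd_Fraction_mult bd_fracs_mult Fraction_in_bd_ring)

lemma bd_ring_uminus: "x \<in> bd_ring \<Longrightarrow> - x \<in> bd_ring"
  by (elim bd_ringE) (simp add: bd_Fraction_uminus bd_fracs_uminus Fraction_in_bd_ring)

lemma bd_cone_add: "x \<in> bd_cone \<Longrightarrow> y \<in> bd_cone \<Longrightarrow> x + y \<in> bd_cone"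
proof (elim bd_coneE)
  fix r s r' s'
  assume x: "x = Fraction r s" "(r, s) \<in> bd_fracs le" "nonneg r"
    and y: "y = Fraction r' s'" "(r', s') \<in> bd_fracs le" "nonneg r'"
  have "nonneg s" "nonneg s'"
    using x(2) y(2) mem_bd_fracs_iff Loc_nonneg by auto
  then have "nonneg (r * s' + r' * s)"
    using nonneg_add[OF nonneg_mult[OF x(3)] nonneg_mult[OF y(3)]] by blast
  then show "x + y \<in> bd_cone"
    using x y Fraction_in_bd_cone[OF bd_fracs_add[OF x(2) y(2)]]
    by (simp add: bd_Fraction_add)
qed

lemma bd_cone_mult: "x \<in> bd_cone \<Longrightarrow> y \<in> bd_cone \<Longrightarrow> x * y \<in> bd_cone"
proof (elim bd_coneE)
  fix r s r' s'
  assume x: "x = Fraction r s" "(r, s) \<in> bd_fracs le" "nonneg r"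
    and y: "y = Fraction r' s'" "(r', s') \<in> bd_fracs le" "nonneg r'"
  then show "x * y \<in> bd_cone"
    using nonneg_mult[OF x(3) y(3)] Fraction_in_bd_cone[OF bd_fracs_mult[OF x(2) y(2)]]
    by (simp add: bd_Fraction_mult)
qed

lemma bd_cone_square: "x \<in> bd_ring \<Longrightarrow> x * x \<in> bd_cone"
proof (elim bd_ringE)
  fix r s
  assume x: "x = Fraction r s" "(r, s) \<in> bd_fracs le"
  then show "x * x \<in> bd_cone"
    using nonneg_square[of r] Fraction_in_bd_cone[OF bd_fracs_mult[OF x(2) x(2)]]
    by (simp add: bd_Fraction_mult)
qed

lemma bd_ring_archimedean:
  assumes "x \<in> bd_ring"
  shows "\<exists>n::nat. of_nat n - x \<in> bd_cone \<and> of_nat n + x \<in> bd_cone"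
proof -
  obtain r s where x: "x = Fraction r s" and rs: "(r, s) \<in> bd_fracs le"
    using assms by (rule bd_ringE)
  then obtain n where "bounded_by r s n"
    using mem_bd_fracs_iff by blast
  then have "(of_nat n * s - r, s) \<in> bd_fracs le" "nonneg (of_nat n * s - r)"
    and "(of_nat n * s + r, s) \<in> bd_fracs le" "nonneg (of_nat n * s + r)"
    using bd_fracs_add[OF bd_fracs_of_nat bd_fracs_uminus[OF rs]] bd_fracs_add[OF bd_fracs_of_nat rs]
    unfolding bounded_by_def by simp_all
  then have "Fraction (of_nat n * s - of_nat 1 * r) s \<in> bd_cone"
    and "Fraction (of_nat n * s + of_nat 1 * r) s \<in> bd_cone"
    using Fraction_in_bd_cone by simp_all
  then show ?thesis
    using of_nat_diff_mult_Fraction[of s n 1 r] of_nat_add_mult_Fraction[of s n 1 r]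
      bd_fracs_non_zero_divisor[OF rs] x
    by (intro exI[of _ n]) simp
qed

lemma of_nat_invertible_bd_ring:
  assumes "k \<ge> 1"
  shows "\<exists>v\<in>bd_ring. of_nat k * v = 1"
proof
  have k: "(of_nat k :: 'a) \<in> Loc le"
    using of_nat_Loc assms by blast
  show "Fraction 1 (of_nat k) \<in> bd_ring"
    using Fraction_in_bd_ring[OF bd_fracs_inverse_Loc[OF k]] .
  show "of_nat k * Fraction 1 (of_nat k :: 'a) = 1"
    using Loc_non_zero_divisor[OF k]
    by (simp add: of_nat_eq_Fraction one_fraction_eq Fraction_eq_iff)
qed

sublocale bd: archimedean_preordering bd_ring bd_cone
proof
  show "0 \<in> bd_ring" "1 \<in> bd_ring"
    using Fraction_in_bd_ring[OF bd_fracs_of_nat[of 0]] Fraction_in_bd_ring[OF bd_fracs_of_nat[of 1]]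
    by (simp_all add: zero_fraction_eq one_fraction_eq)
  show "bd_cone \<subseteq> bd_ring"
    unfolding bd_cone_def bd_ring_def by blast
qed (fact bd_ring_add bd_ring_uminus bd_ring_mult bd_cone_add bd_cone_mult bd_cone_square
      bd_ring_archimedean of_nat_invertible_bd_ring)+

section \<open>The kernel of the extended Gelfand transformation\<close>

lemma nonneg_if_Fraction_eq:
  assumes "Fraction r s = Fraction r' s'" and s: "s \<in> Loc le" and s': "s' \<in> Loc le"
    and "nonneg r'"
  shows "nonneg r"
proof -
  have "r * s' = r' * s"
    using assms(1) Fraction_eq_iff Loc_non_zero_divisor s s' by blast
  moreover have "nonneg (r' * s)"
    using nonneg_mult[OF assms(4) Loc_nonneg[OF s]] .
  ultimately show "nonneg r"
    using Loc_reflects_nonneg[OF s'] by simp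
qed

lemma Fraction_in_bd_cone_iff:
  assumes "Fraction r s \<in> bd_ring" and s: "s \<in> Loc le"
  shows "Fraction r s \<in> bd_cone \<longleftrightarrow> nonneg r"
proof
  assume "Fraction r s \<in> bd_cone"
  then obtain r' s' where "Fraction r s = Fraction r' s'" "(r', s') \<in> bd_fracs le" "nonneg r'"
    by (rule bd_coneE)
  then show "nonneg r"
    using nonneg_if_Fraction_eq s mem_bd_fracs_iff by blast
next
  assume "nonneg r"
  obtain r' s' where eq: "Fraction r s = Fraction r' s'" and r's': "(r', s') \<in> bd_fracs le"
    using assms(1) by (rule bd_ringE)
  then have "nonneg r'"
    using nonneg_if_Fraction_eq[OF eq[symmetric] _ s \<open>nonneg r\<close>] mem_bd_fracs_iff by blast
  then show "Fraction r s \<in> bd_cone"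
    using eq Fraction_in_bd_cone[OF r's'] by simp
qed

lemma one_diff_mult_Fraction_in_bd_cone_iff:
  assumes u: "u \<in> Loc le" and ru: "(r, u) \<in> bd_fracs le"
  shows "1 - of_nat n * Fraction r u \<in> bd_cone \<longleftrightarrow> le (of_nat n * r) u"
proof -
  have "1 - of_nat n * Fraction r u \<in> bd_ring"
    using Fraction_in_bd_ring[OF ru] by (intro bd.diff_mem bd.mult_mem bd.one_mem bd.of_nat_mem)
  moreover have "1 - of_nat n * Fraction r u = Fraction (u - of_nat n * r) u"
    using of_nat_diff_mult_Fraction[of u 1 n r] Loc_non_zero_divisor[OF u] by simp
  ultimately show ?thesis
    using Fraction_in_bd_cone_iff[OF _ u] le_iff_nonneg_diff[of "of_nat n * r" u] by simp
qed

lemma one_add_mult_Fraction_in_bd_cone_iff: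
  assumes u: "u \<in> Loc le" and ru: "(r, u) \<in> bd_fracs le"
  shows "1 + of_nat n * Fraction r u \<in> bd_cone \<longleftrightarrow> le (- u) (of_nat n * r)"
proof -
  have "1 + of_nat n * Fraction r u \<in> bd_ring"
    using Fraction_in_bd_ring[OF ru] by (intro bd.add_mem bd.mult_mem bd.one_mem bd.of_nat_mem)
  moreover have "1 + of_nat n * Fraction r u = Fraction (u + of_nat n * r) u"
    using of_nat_add_mult_Fraction[of u 1 n r] Loc_non_zero_divisor[OF u] by simp
  ultimately show ?thesis
    using Fraction_in_bd_cone_iff[OF _ u] le_iff_nonneg_diff[of "- u"] by (simp add: add.commute)
qed

lemma characters_vanish_iff_bounded:
  assumes u: "u \<in> Loc le" and ru: "(r, u) \<in> bd_fracs le"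
  shows "(\<forall>\<psi>. bd.character \<psi> \<longrightarrow> \<psi> (Fraction r u) = 0) \<longleftrightarrow>
    (\<forall>n::nat. n \<ge> 1 \<longrightarrow> le (- u) (of_nat n * r) \<and> le (of_nat n * r) u)"
proof -
  have x: "Fraction r u \<in> bd_ring"
    by (rule Fraction_in_bd_ring[OF ru])
  have character_value: "\<psi> (1 - of_nat n * Fraction r u) = 1 - real n * \<psi> (Fraction r u)"
    "\<psi> (1 + of_nat n * Fraction r u) = 1 + real n * \<psi> (Fraction r u)"
    if "bd.character \<psi>" for \<psi> n
    using that x
    by (simp_all add: bd.character_diff bd.character_add bd.character_one bd.character_of_nat_mult
        bd.one_mem bd.mult_mem bd.of_nat_mem)
  have in_ring: "1 - of_nat n * Fraction r u \<in> bd_ring" "1 + of_nat n * Fraction r u \<in> bd_ring" for n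
    using x by (auto intro!: bd.diff_mem bd.add_mem bd.mult_mem bd.one_mem bd.of_nat_mem)
  show ?thesis
  proof (intro iffI allI impI)
    assume vanish: "\<forall>\<psi>. bd.character \<psi> \<longrightarrow> \<psi> (Fraction r u) = 0"
    fix n :: nat
    have "1 - of_nat n * Fraction r u \<in> bd_cone"
      by (rule bd.in_cone_if_characters_pos[OF in_ring(1)]) (simp add: vanish character_value)
    moreover have "1 + of_nat n * Fraction r u \<in> bd_cone"
      by (rule bd.in_cone_if_characters_pos[OF in_ring(2)]) (simp add: vanish character_value)
    ultimately show "le (- u) (of_nat n * r) \<and> le (of_nat n * r) u"
      using one_diff_mult_Fraction_in_bd_cone_iff[OF u ru] one_add_mult_Fraction_in_bd_cone_iff[OF u ru]
      by blast
  next
    assume bounded: "\<forall>n::nat. n \<ge> 1 \<longrightarrow> le (- u) (of_nat n * r) \<and> le (of_nat n * r) u"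
    fix \<psi> assume \<psi>: "bd.character \<psi>"
    have "- 1 \<le> real n * \<psi> (Fraction r u) \<and> real n * \<psi> (Fraction r u) \<le> 1" if "n \<ge> 1" for n
    proof -
      have "1 - of_nat n * Fraction r u \<in> bd_cone" "1 + of_nat n * Fraction r u \<in> bd_cone"
        using that bounded one_diff_mult_Fraction_in_bd_cone_iff[OF u ru]
          one_add_mult_Fraction_in_bd_cone_iff[OF u ru] by blast+
      then show ?thesis
        using bd.character_nonneg[OF \<psi>] character_value[OF \<psi>] by fastforce
    qed
    then show "\<psi> (Fraction r u) = 0"
      by (rule eq_0_if_nat_mult_bounded)
  qed
qed

definition char_of_character :: "('a fraction \<Rightarrow> real) \<Rightarrow> 'a \<times> 'a \<Rightarrow> real" where
  "char_of_character \<psi> p = (if p \<in> bd_fracs le then \<psi> (Fraction (fst p) (snd p)) else 0)"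

lemma char_of_character_Fraction:
  "(r, s) \<in> bd_fracs le \<Longrightarrow> char_of_character \<psi> (r, s) = \<psi> (Fraction r s)"
  by (simp add: char_of_character_def)

lemma char_of_character_mem_chars:
  assumes \<psi>: "bd.character \<psi>"
  shows "char_of_character \<psi> \<in> chars le"
  unfolding chars_def
proof (intro CollectI conjI allI ballI impI)
  show "char_of_character \<psi> p = 0" if "p \<notin> bd_fracs le" for p
    using that by (simp add: char_of_character_def)
  show "char_of_character \<psi> p = char_of_character \<psi> q"
    if "p \<in> bd_fracs le" "q \<in> bd_fracs le" "frac_eq p q" for p q
  proof -
    obtain r s r' s' where p: "p = (r, s)" and q: "q = (r', s')"
      by (cases p, cases q)
    have "r * s' = r' * s"
      using that(3) unfolding p q frac_eq_def by simp
    then have "Fraction r s = Fraction r' s'"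
      using that(1,2) unfolding p q
      by (simp add: Fraction_eq_iff bd_fracs_non_zero_divisor[of r s] bd_fracs_non_zero_divisor[of r' s'])
    then show ?thesis
      using that(1,2) unfolding p q by (simp add: char_of_character_Fraction)
  qed
  show "char_of_character \<psi> (1, 1) = 1"
    using bd_fracs_of_nat[of 1] bd.character_one[OF \<psi>] by (simp add: char_of_character_def one_fraction_eq)
  fix r s r' s' assume "(r, s) \<in> bd_fracs le \<and> (r', s') \<in> bd_fracs le"
  then have rs: "(r, s) \<in> bd_fracs le" and rs': "(r', s') \<in> bd_fracs le" by auto
  show "char_of_character \<psi> (r * s' + r' * s, s * s')
      = char_of_character \<psi> (r, s) + char_of_character \<psi> (r', s')"
    using bd.character_add[OF \<psi> Fraction_in_bd_ring[OF rs] Fraction_in_bd_ring[OF rs']]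
    by (simp add: char_of_character_Fraction rs rs' bd_fracs_add bd_Fraction_add)
  show "char_of_character \<psi> (r * r', s * s')
      = char_of_character \<psi> (r, s) * char_of_character \<psi> (r', s')"
    using bd.character_mult[OF \<psi> Fraction_in_bd_ring[OF rs] Fraction_in_bd_ring[OF rs']]
    by (simp add: char_of_character_Fraction rs rs' bd_fracs_mult bd_Fraction_mult)
next
  fix p assume p: "p \<in> bd_fracs le" and "frac_le le (0, 1) p"
  then have "Fraction (fst p) (snd p) \<in> bd_cone"
    using Fraction_in_bd_cone by (simp add: frac_le_def)
  then show "0 \<le> char_of_character \<psi> p"
    using bd.character_nonneg[OF \<psi>] p by (simp add: char_of_character_def)
qed

lemma chars_respects_Fraction:
  assumes \<phi>: "\<phi> \<in> chars le" and rs: "(r, s) \<in> bd_fracs le" and rs': "(r', s') \<in> bd_fracs le"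
    and eq: "Fraction r s = Fraction r' s'"
  shows "\<phi> (r, s) = \<phi> (r', s')"
proof -
  have "frac_eq (r, s) (r', s')"
    using eq Fraction_eq_iff[OF bd_fracs_non_zero_divisor[OF rs] bd_fracs_non_zero_divisor[OF rs']]
    unfolding frac_eq_def by simp
  then show ?thesis
    using \<phi> rs rs' unfolding chars_def by blast
qed

definition character_of_char :: "('a \<times> 'a \<Rightarrow> real) \<Rightarrow> 'a fraction \<Rightarrow> real" where
  "character_of_char \<phi> x = \<phi> (SOME p. p \<in> bd_fracs le \<and> x = Fraction (fst p) (snd p))"

lemma character_of_char_Fraction:
  assumes \<phi>: "\<phi> \<in> chars le" and rs: "(r, s) \<in> bd_fracs le"
  shows "character_of_char \<phi> (Fraction r s) = \<phi> (r, s)"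
proof -
  let ?p = "SOME p. p \<in> bd_fracs le \<and> Fraction r s = Fraction (fst p) (snd p)"
  have "\<exists>p. p \<in> bd_fracs le \<and> Fraction r s = Fraction (fst p) (snd p)"
    using rs by auto
  then have p: "?p \<in> bd_fracs le \<and> Fraction r s = Fraction (fst ?p) (snd ?p)"
    by (rule someI_ex)
  have "character_of_char \<phi> (Fraction r s) = \<phi> (fst ?p, snd ?p)"
    unfolding character_of_char_def by simp
  also have "\<dots> = \<phi> (r, s)"
    using chars_respects_Fraction[OF \<phi> _ rs p[THEN conjunct2, symmetric]] p by simp
  finally show ?thesis .
qed

lemma character_character_of_char:
  assumes \<phi>: "\<phi> \<in> chars le"
  shows "bd.character (character_of_char \<phi>)"
  unfolding bd.character_def
proof (intro conjI ballI)
  fix x y assume "x \<in> bd_ring" "y \<in> bd_ring"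
  then obtain r s r' s' where x: "x = Fraction r s" "(r, s) \<in> bd_fracs le"
    and y: "y = Fraction r' s'" "(r', s') \<in> bd_fracs le"
    by (elim bd_ringE)
  show "character_of_char \<phi> (x + y) = character_of_char \<phi> x + character_of_char \<phi> y"
    using \<phi> x y unfolding chars_def
    by (simp add: bd_Fraction_add bd_fracs_add character_of_char_Fraction[OF \<phi>])
  show "character_of_char \<phi> (x * y) = character_of_char \<phi> x * character_of_char \<phi> y"
    using \<phi> x y unfolding chars_def
    by (simp add: bd_Fraction_mult bd_fracs_mult character_of_char_Fraction[OF \<phi>])
next
  show "character_of_char \<phi> 1 = 1"
    using \<phi> character_of_char_Fraction[OF \<phi> bd_fracs_of_nat[of 1]] unfolding chars_def
    by (simp add: one_fraction_eq)
next
  fix t assume "t \<in> bd_cone"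
  then obtain r s where "t = Fraction r s" "(r, s) \<in> bd_fracs le" "nonneg r"
    by (rule bd_coneE)
  then show "character_of_char \<phi> t \<ge> 0"
    using \<phi> character_of_char_Fraction[OF \<phi>] unfolding chars_def frac_le_def by simp
qed

lemma ext_gelfandE:
  obtains s where "s \<in> Loc le" "(r, s) \<in> bd_fracs le" "ext_gelfand le r = gelfand_rep le r s"
proof -
  obtain t where "t \<in> Loc le" "le (- t) r" "le r t"
    using localizable unfolding localizable_def by blast
  then have "\<exists>s. s \<in> Loc le \<and> (r, s) \<in> bd_fracs le"
    using bd_fracs_if_le by blast
  then show ?thesis
    using that someI_ex[of "\<lambda>s. s \<in> Loc le \<and> (r, s) \<in> bd_fracs le"]
    unfolding ext_gelfand_def by blast
qed

lemma character_Fraction_one_Loc_nonneg: "bd.character \<psi> \<Longrightarrow> t \<in> Loc le \<Longrightarrow> \<psi> (Fraction 1 t) \<ge> 0"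
  using bd.character_nonneg Fraction_in_bd_cone[OF bd_fracs_inverse_Loc nonneg_one] by blast

lemma gelfand_kernel_characters_vanish:
  assumes "r \<in> gelfand_kernel le"
  obtains u where "u \<in> Loc le" "(r, u) \<in> bd_fracs le"
    "\<forall>\<psi>. bd.character \<psi> \<longrightarrow> \<psi> (Fraction r u) = 0"
proof -
  obtain s where s: "s \<in> Loc le" "(r, s) \<in> bd_fracs le" and ext: "ext_gelfand le r = gelfand_rep le r s"
    by (rule ext_gelfandE)
  obtain A where "A \<in> D_loc le" and A: "A \<subseteq> O_fin le s"
    and vanish: "\<And>\<phi>. \<phi> \<in> A \<Longrightarrow> inverse (\<phi> (1, s)) * \<phi> (r, s) = 0"
    using assms unfolding gelfand_kernel_def mem_Collect_eq approx_eq_def ext gelfand_rep_def by auto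
  then obtain t where t: "t \<in> Loc le" and A_eq: "A = O_fin le t"
    unfolding D_loc_def by blast
  have rt: "(1, t) \<in> bd_fracs le"
    using bd_fracs_inverse_Loc[OF t] .
  have "\<psi> (Fraction r (s * t)) = 0" if \<psi>: "bd.character \<psi>" for \<psi>
  proof -
    have split: "\<psi> (Fraction r (s * t)) = \<psi> (Fraction r s) * \<psi> (Fraction 1 t)"
      using bd.character_mult[OF \<psi> Fraction_in_bd_ring[OF s(2)] Fraction_in_bd_ring[OF rt]]
      by (simp add: bd_Fraction_mult[OF s(2) rt])
    show ?thesis
    proof (cases "\<psi> (Fraction 1 t) = 0")
      case False
      then have "\<psi> (Fraction 1 t) > 0"
        using character_Fraction_one_Loc_nonneg[OF \<psi> t] by simp
      then have "char_of_character \<psi> \<in> A"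
        using char_of_character_mem_chars[OF \<psi>] rt unfolding A_eq O_fin_def
        by (simp add: char_of_character_Fraction)
      then have "char_of_character \<psi> (1, s) > 0"
        and "inverse (char_of_character \<psi> (1, s)) * char_of_character \<psi> (r, s) = 0"
        using A vanish unfolding O_fin_def by auto
      then have "\<psi> (Fraction r s) = 0"
        using s(2) by (simp add: char_of_character_Fraction)
      then show ?thesis
        using split by simp
    qed (use split in simp)
  qed
  moreover have "(r, s * t) \<in> bd_fracs le"
    using bd_fracs_mult[OF s(2) rt] by simp
  ultimately show ?thesis
    using that Loc_mult[OF s(1) t] by blast
qed

lemma in_gelfand_kernel_if_characters_vanish:
  assumes u: "u \<in> Loc le" and ru: "(r, u) \<in> bd_fracs le"
    and vanish: "\<And>\<psi>. bd.character \<psi> \<Longrightarrow> \<psi> (Fraction r u) = 0"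
  shows "r \<in> gelfand_kernel le"
proof -
  obtain s where s: "s \<in> Loc le" "(r, s) \<in> bd_fracs le" and ext: "ext_gelfand le r = gelfand_rep le r s"
    by (rule ext_gelfandE)
  have bd: "(1, u) \<in> bd_fracs le" "(1, s) \<in> bd_fracs le" "(1, u * s) \<in> bd_fracs le"
    using bd_fracs_inverse_Loc Loc_mult u s(1) by blast+
  have "\<phi> \<in> O_fin le s \<and> \<phi> (r, s) = 0" if "\<phi> \<in> O_fin le (u * s)" for \<phi>
  proof -
    have \<phi>: "\<phi> \<in> chars le" and pos: "\<phi> (1, u * s) > 0"
      using that unfolding O_fin_def by auto
    define \<psi> where "\<psi> = character_of_char \<phi>"
    have \<psi>: "bd.character \<psi>"
      unfolding \<psi>_def by (rule character_character_of_char[OF \<phi>])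
    have \<phi>_eq: "\<phi> (r', s') = \<psi> (Fraction r' s')" if "(r', s') \<in> bd_fracs le" for r' s'
      unfolding \<psi>_def using character_of_char_Fraction[OF \<phi> that] by simp
    have "Fraction 1 (u * s) = Fraction 1 u * Fraction 1 s"
      using bd_Fraction_mult[OF bd(1,2)] by simp
    then have "\<psi> (Fraction 1 u) * \<psi> (Fraction 1 s) > 0"
      using pos \<phi>_eq[OF bd(3)] bd.character_mult[OF \<psi>] Fraction_in_bd_ring[OF bd(1)]
        Fraction_in_bd_ring[OF bd(2)] by simp
    then have "\<psi> (Fraction 1 s) > 0"
      using character_Fraction_one_Loc_nonneg[OF \<psi> u] character_Fraction_one_Loc_nonneg[OF \<psi> s(1)]
      by (auto simp: zero_less_mult_iff)
    moreover have "\<psi> (Fraction r s) = 0"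
    proof -
      have "Fraction r s * Fraction 1 u = Fraction r u * Fraction 1 s"
        using bd_Fraction_mult[OF s(2) bd(1)] bd_Fraction_mult[OF ru bd(2)] by (simp add: mult.commute)
      then have "\<psi> (Fraction r s) * \<psi> (Fraction 1 u) = \<psi> (Fraction r u) * \<psi> (Fraction 1 s)"
        using bd.character_mult[OF \<psi> Fraction_in_bd_ring[OF s(2)] Fraction_in_bd_ring[OF bd(1)]]
          bd.character_mult[OF \<psi> Fraction_in_bd_ring[OF ru] Fraction_in_bd_ring[OF bd(2)]]
        by simp
      then show ?thesis
        using \<open>\<psi> (Fraction 1 u) * \<psi> (Fraction 1 s) > 0\<close> vanish[OF \<psi>] by auto
    qed
    ultimately show ?thesis
      using \<phi> \<phi>_eq[OF s(2)] \<phi>_eq[OF bd(2)] unfolding O_fin_def by simp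
  qed
  then have "O_fin le (u * s) \<subseteq> fst (ext_gelfand le r) \<inter> chars le"
    and "\<forall>\<phi>\<in>O_fin le (u * s). snd (ext_gelfand le r) \<phi> = 0"
    unfolding ext gelfand_rep_def O_fin_def by auto
  moreover have "O_fin le (u * s) \<in> D_loc le"
    unfolding D_loc_def using Loc_mult[OF u s(1)] by blast
  ultimately show ?thesis
    unfolding gelfand_kernel_def approx_eq_def by auto
qed

lemma le_bounds_mono:
  assumes "le s t" and "le (- s) a" and "le a s"
  shows "le (- t) a \<and> le a t"
proof
  have "le (- t) (- s)"
    using assms(1) le_iff_nonneg_diff[of s t] le_iff_nonneg_diff[of "- t" "- s"] by simp
  then show "le (- t) a"
    using assms(2) po_le_trans by blast
  show "le a t"
    using assms(3,1) po_le_trans by blast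
qed

end

theorem corollary28:
  fixes le :: "'a::comm_ring_1 \<Rightarrow> 'a \<Rightarrow> bool"
  assumes "po_comm_ring le"
    and "localizable le"
    and "\<forall>n::nat. n \<ge> 1 \<longrightarrow> (of_nat n :: 'a) \<in> Loc le"
  shows "gelfand_kernel le =
    {r. \<exists>s. le 0 s \<and> (\<forall>n::nat. n \<ge> 1 \<longrightarrow> le (- s) (of_nat n * r) \<and> le (of_nat n * r) s)}"
proof -
  interpret localizable_ring le
    using assms by unfold_locales auto
  show ?thesis
  proof (intro set_eqI iffI)
    fix r assume "r \<in> gelfand_kernel le"
    then obtain u where "u \<in> Loc le" "(r, u) \<in> bd_fracs le"
      and "\<forall>\<psi>. bd.character \<psi> \<longrightarrow> \<psi> (Fraction r u) = 0"
      by (rule gelfand_kernel_characters_vanish)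
    then show "r \<in> {r. \<exists>s. le 0 s \<and> (\<forall>n::nat. n \<ge> 1 \<longrightarrow> le (- s) (of_nat n * r) \<and> le (of_nat n * r) s)}"
      using characters_vanish_iff_bounded Loc_nonneg by blast
  next
    fix r assume "r \<in> {r. \<exists>s. le 0 s \<and> (\<forall>n::nat. n \<ge> 1 \<longrightarrow> le (- s) (of_nat n * r) \<and> le (of_nat n * r) s)}"
    then obtain s where bounded: "\<And>n::nat. n \<ge> 1 \<Longrightarrow> le (- s) (of_nat n * r) \<and> le (of_nat n * r) s"
      by blast
    obtain t where t: "t \<in> Loc le" "le s t"
      using localizable unfolding localizable_def by blast
    have bounded_t: "\<forall>n::nat. n \<ge> 1 \<longrightarrow> le (- t) (of_nat n * r) \<and> le (of_nat n * r) t"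
      using bounded le_bounds_mono[OF t(2)] by blast
    then have "(r, t) \<in> bd_fracs le"
      using bd_fracs_if_le[OF t(1)] bounded_t[rule_format, of 1] by simp
    then show "r \<in> gelfand_kernel le"
      using in_gelfand_kernel_if_characters_vanish characters_vanish_iff_bounded t(1) bounded_t
      by blast
  qed
qed

end
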